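(* Let $\mathrm{M}=\langle e_1+I,\ e_2+I,\ A\rangle$, where $e_1,e_2$ are the standard basis vectors of $E^2$ and $A=\begin{pmatrix}0&1\\1&0\end{pmatrix}$ transposes $e_1$ and $e_2$. Then the Lie group $\mathrm{Sym}(\mathrm{M})$ is isomorphic to $\mathrm{O}(2)$, $\mathrm{Sym}(\mathrm{M})=\mathrm{Aff}(\mathrm{M})$, and $\Omega:\mathrm{Aff}(\mathrm{M})\to\mathrm{Out}(\mathrm{M})$ maps the subgroup $\{\mathrm{idt.}, (-I)_\star\}$ isomorphically onto $\mathrm{Out}(\mathrm{M})$.
   Context: Affine maps of $E^2$ are written $a+A$ ($x\mapsto a+Ax$); $a+I$ is translation by $a$. For a 2-space group $\mathrm{M}$, let $N_A(\mathrm{M})$ be its normalizer in the affine group of $E^2$. Each $a+A\in N_A(\mathrm{M})$ induces an affinity $(a+A)_\star:\mathrm{M}x\mapsto\mathrm{M}(a+Ax)$ of the flat orbifold $E^2/\mathrm{M}$; $\mathrm{Aff}(\mathrm{M})$ is the group of all such affinities, and $\mathrm{Sym}(\mathrm{M})=\mathrm{Isom}(E^2/\mathrm{M})$ is its subgroup of isometries of the flat orbifold $E^2/\mathrm{M}$ (a Lie group). idt. denotes the identity. $\Omega:\mathrm{Aff}(\mathrm{M})\to\mathrm{Out}(\mathrm{M})$ sends $(a+A)_\star$ to the outer automorphism class of $g\mapsto (a+A)g(a+A)^{-1}$ on $\mathrm{M}$. Here $E^2/\mathrm{M}$ is a Möbius band. *)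

theory Defs
  imports "HOL-Analysis.Analysis" "HOL-Algebra.Bij" "HOL-Algebra.Generated_Groups" "HOL-Algebra.Coset"
begin

text \<open>An affine map a+A (x \<mapsto> a + A x) is represented by the pair (a, A).\<close>

type_synonym aff = "(real^2) \<times> (real^2^2)"

definition aff_apply :: "aff \<Rightarrow> real^2 \<Rightarrow> real^2" where
  "aff_apply g x = fst g + snd g *v x"

definition aff_mult :: "aff \<Rightarrow> aff \<Rightarrow> aff" where
  "aff_mult g h = (fst g + snd g *v fst h, snd g ** snd h)"

definition aff_inv :: "aff \<Rightarrow> aff" where
  "aff_inv g = (- (matrix_inv (snd g) *v fst g), matrix_inv (snd g))"

definition AffGroup :: "aff monoid" where
  "AffGroup = \<lparr>carrier = {g. invertible (snd g)}, mult = aff_mult, one = (0, mat 1)\<rparr>"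

definition matA :: "real^2^2" where
  "matA = vector [vector [0, 1], vector [1, 0]]"

definition Mcm :: "aff set" where
  "Mcm = generate AffGroup {(axis 1 1, mat 1), (axis 2 1, mat 1), (0, matA)}"

definition Mgrp :: "aff set \<Rightarrow> aff monoid" where
  "Mgrp M = AffGroup\<lparr>carrier := M\<rparr>"

definition conj_aff :: "aff \<Rightarrow> aff \<Rightarrow> aff" where
  "conj_aff g m = aff_mult (aff_mult g m) (aff_inv g)"

definition NA :: "aff set \<Rightarrow> aff set" where
  "NA M = {g \<in> carrier AffGroup. conj_aff g ` M = M}"

definition orbit_of :: "aff set \<Rightarrow> real^2 \<Rightarrow> (real^2) set" where
  "orbit_of M x = (\<lambda>g. aff_apply g x) ` M"

text \<open>Points of the orbifold E^2/M are the orbits Mx.\<close>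
definition Orb :: "aff set \<Rightarrow> (real^2) set set" where
  "Orb M = range (orbit_of M)"

definition star :: "aff set \<Rightarrow> aff \<Rightarrow> ((real^2) set \<Rightarrow> (real^2) set)" where
  "star M g = (\<lambda>X \<in> Orb M. orbit_of M (aff_apply g (SOME x. x \<in> X)))"

definition Aff :: "aff set \<Rightarrow> ((real^2) set \<Rightarrow> (real^2) set) set" where
  "Aff M = star M ` NA M"

definition AffGrp :: "aff set \<Rightarrow> ((real^2) set \<Rightarrow> (real^2) set) monoid" where
  "AffGrp M = BijGroup (Orb M) \<lparr>carrier := Aff M\<rparr>"

definition orb_dist :: "(real^2) set \<Rightarrow> (real^2) set \<Rightarrow> real" where
  "orb_dist X Y = Inf {dist x y | x y. x \<in> X \<and> y \<in> Y}"

definition Sym :: "aff set \<Rightarrow> ((real^2) set \<Rightarrow> (real^2) set) set" where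
  "Sym M = {\<phi> \<in> Aff M. \<forall>X \<in> Orb M. \<forall>Y \<in> Orb M. orb_dist (\<phi> X) (\<phi> Y) = orb_dist X Y}"

definition SymGrp :: "aff set \<Rightarrow> ((real^2) set \<Rightarrow> (real^2) set) monoid" where
  "SymGrp M = BijGroup (Orb M) \<lparr>carrier := Sym M\<rparr>"

text \<open>Topology of Sym(M): uniform convergence (= compact-open topology) on the compact orbifold.\<close>
definition sym_dist :: "aff set \<Rightarrow> ((real^2) set \<Rightarrow> (real^2) set) \<Rightarrow> ((real^2) set \<Rightarrow> (real^2) set) \<Rightarrow> real" where
  "sym_dist M \<phi> \<psi> = Sup ((\<lambda>X. orb_dist (\<phi> X) (\<psi> X)) ` Orb M)"

definition O2 :: "(real^2^2) monoid" where
  "O2 = \<lparr>carrier = {Q. orthogonal_matrix Q}, mult = (**), one = mat 1\<rparr>"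

definition homeo_Sym_O2 :: "aff set \<Rightarrow> (((real^2) set \<Rightarrow> (real^2) set) \<Rightarrow> (real^2^2)) \<Rightarrow> bool" where
  "homeo_Sym_O2 M f \<longleftrightarrow>
     (\<forall>\<phi> \<in> Sym M. \<forall>e>0. \<exists>d>0. \<forall>\<psi> \<in> Sym M. sym_dist M \<phi> \<psi> < d \<longrightarrow> norm (f \<phi> - f \<psi>) < e) \<and>
     (\<forall>\<phi> \<in> Sym M. \<forall>e>0. \<exists>d>0. \<forall>\<psi> \<in> Sym M. norm (f \<phi> - f \<psi>) < d \<longrightarrow> sym_dist M \<phi> \<psi> < e)"

definition conj_aut :: "aff set \<Rightarrow> aff \<Rightarrow> (aff \<Rightarrow> aff)" where
  "conj_aut M g = (\<lambda>m \<in> M. conj_aff g m)"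

definition Inn :: "aff set \<Rightarrow> (aff \<Rightarrow> aff) set" where
  "Inn M = conj_aut M ` M"

definition Out :: "aff set \<Rightarrow> (aff \<Rightarrow> aff) set monoid" where
  "Out M = AutoGroup (Mgrp M) Mod Inn M"

definition Omega :: "aff set \<Rightarrow> ((real^2) set \<Rightarrow> (real^2) set) \<Rightarrow> (aff \<Rightarrow> aff) set" where
  "Omega M \<phi> = Inn M #>\<^bsub>AutoGroup (Mgrp M)\<^esub>
                 conj_aut M (SOME g. g \<in> NA M \<and> star M g = \<phi>)"

end

theory Submission
  imports Defs
begin

text \<open>
  M consists of the maps \<open>(n, I)\<close> and \<open>(n, A)\<close> with \<open>n \<in> \<int>\<^sup>2\<close>. Its normalizer consists of the
  \<open>(a, B)\<close> with \<open>B \<in> {\<plusminus>I, \<plusminus>A}\<close> and \<open>a\<^sub>1 - a\<^sub>2 \<in> \<int>\<close>; all of them are isometries, so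
  Sym(M) = Aff(M). Two of them induce the same map of the orbifold iff their linear parts agree
  modulo the point group \<open>{I, A}\<close> and their translation parts satisfy \<open>a\<^sub>1 - b\<^sub>1 \<in> \<int>\<close>. Hence sending
  \<open>(a, B)\<^sub>\<star>\<close> to the rotation by \<open>2\<pi>a\<^sub>1\<close> (if \<open>B \<in> {I, A}\<close>) or to the reflection with the same
  first column (otherwise) is an isomorphism onto O(2). On both sides the distance between two
  elements of the same orientation is comparable to the distance from \<open>a\<^sub>1 - b\<^sub>1\<close> to \<open>\<int>\<close>, which
  gives the homeomorphism. Every automorphism of M is conjugation by an element of the normalizer,
  and it is inner exactly when the linear part of that element lies in \<open>{I, A}\<close>; so Out(M)
  consists of the classes of the identity and of \<open>-I\<close>.
\<close>

section \<open>Matrices and lattices\<close>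

lemmas cart2_simps = vec_eq_iff forall_2 matrix_vector_mult_def matrix_matrix_mult_def sum_2 mat_def

lemma matA_nth [simp]: "matA $ i $ j = (if i = j then 0 else (1::real))"
  unfolding matA_def using exhaust_2[of i] exhaust_2[of j] by auto

lemma matA_mult_vec_nth [simp]: "(matA *v x) $ 1 = x $ 2" "(matA *v x) $ 2 = x $ 1"
  by (simp_all add: cart2_simps)

lemma matA_involution [simp]: "matA ** matA = mat 1"
  by (simp add: cart2_simps)

definition point_group :: "(real^2^2) set" where
  "point_group = {mat 1, matA}"

definition klein4 :: "(real^2^2) set" where
  "klein4 = {mat 1, matA, - mat 1, - matA}"

lemma klein4_distinct [simp]:
  "matA \<noteq> mat 1" "mat 1 \<noteq> matA" "matA \<noteq> - mat 1" "- mat 1 \<noteq> matA"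
  "matA \<noteq> - matA" "- matA \<noteq> matA" "mat 1 \<noteq> - matA" "- matA \<noteq> mat 1"
  "mat 1 \<noteq> - (mat 1 :: real^2^2)" "- mat 1 \<noteq> (mat 1 :: real^2^2)"
  by (auto simp: cart2_simps dest!: spec[of _ 1] spec[of _ 2])

lemma mult_uminus_matrix [simp]:
  "(- A) ** (B::real^'n^'n) = - (A ** B)" "A ** (- B) = - (A ** B)"
  "(- A) *v x = - (A *v x)" "A *v (- x) = - (A *v x)"
  by (simp_all add: vec_eq_iff matrix_matrix_mult_def matrix_vector_mult_def sum_negf)

lemma klein4_simps [simp]: "mat 1 \<in> klein4" "matA \<in> klein4" "- mat 1 \<in> klein4" "- matA \<in> klein4"
  by (simp_all add: klein4_def)

lemma point_group_simps [simp]: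
  "mat 1 \<in> point_group" "matA \<in> point_group" "- mat 1 \<notin> point_group" "- matA \<notin> point_group"
  by (simp_all add: point_group_def)

lemma point_group_subset_klein4: "point_group \<subseteq> klein4"
  by (auto simp: point_group_def klein4_def)

lemma klein4_involution: "B \<in> klein4 \<Longrightarrow> B ** B = mat 1"
  unfolding klein4_def by (elim insertE emptyE; simp add: matrix_mul_lid)

lemma klein4_commute: "B \<in> klein4 \<Longrightarrow> C \<in> klein4 \<Longrightarrow> B ** C = C ** B"
  unfolding klein4_def by (elim insertE emptyE; simp add: matrix_mul_lid matrix_mul_rid)

lemma klein4_mult_point_group_iff:
  "B \<in> klein4 \<Longrightarrow> C \<in> klein4 \<Longrightarrow> B ** C \<in> point_group \<longleftrightarrow> (B \<in> point_group \<longleftrightarrow> C \<in> point_group)"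
  unfolding klein4_def point_group_def
  by (elim insertE emptyE; simp add: matrix_mul_lid matrix_mul_rid)

definition diag_sign :: "real^2^2 \<Rightarrow> real" where
  "diag_sign B = (if B \<in> point_group then 1 else -1)"

lemma klein4_mult_diag:
  "B \<in> klein4 \<Longrightarrow> B *v vector [t, t] = vector [diag_sign B * t, diag_sign B * t]"
  unfolding klein4_def diag_sign_def point_group_def
  by (elim insertE emptyE; simp add: matrix_vector_mul_lid; simp add: vec_eq_iff forall_2 vector_2)

lemma klein4_orthogonal: "B \<in> klein4 \<Longrightarrow> orthogonal_matrix B"
  by (auto simp: klein4_def orthogonal_matrix cart2_simps transpose_def)

definition int_lattice :: "(real^2) set" where
  "int_lattice = {v. v$1 \<in> \<int> \<and> v$2 \<in> \<int>}"

definition lattice_plus_diag :: "(real^2) set" where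
  "lattice_plus_diag = {a. a$1 - a$2 \<in> \<int>}"

lemma int_lattice_0 [simp]: "0 \<in> int_lattice"
  and int_lattice_axis [simp]: "axis 1 1 \<in> int_lattice" "axis 2 1 \<in> int_lattice"
  by (simp_all add: int_lattice_def axis_def)

lemma int_lattice_add: "u \<in> int_lattice \<Longrightarrow> v \<in> int_lattice \<Longrightarrow> u + v \<in> int_lattice"
  and int_lattice_diff: "u \<in> int_lattice \<Longrightarrow> v \<in> int_lattice \<Longrightarrow> u - v \<in> int_lattice"
  and int_lattice_uminus: "u \<in> int_lattice \<Longrightarrow> - u \<in> int_lattice"
  by (simp_all add: int_lattice_def)

lemma int_lattice_klein4: "B \<in> klein4 \<Longrightarrow> u \<in> int_lattice \<Longrightarrow> B *v u \<in> int_lattice"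
  unfolding klein4_def int_lattice_def by (auto simp: matrix_vector_mul_lid)

lemma int_lattice_subset_plus_diag: "int_lattice \<subseteq> lattice_plus_diag"
  by (auto simp: int_lattice_def lattice_plus_diag_def)

lemma Ints_diff_commute: "(x::real) - y \<in> \<int> \<Longrightarrow> y - x \<in> \<int>"
  by (metis Ints_minus minus_diff_eq)

lemma Ints_mult_eq_1: "(x::real) \<in> \<int> \<Longrightarrow> y \<in> \<int> \<Longrightarrow> x * y = 1 \<Longrightarrow> x = 1 \<or> x = -1"
proof (elim Ints_cases)
  fix a b :: int
  assume "x = of_int a" "y = of_int b" "x * y = 1"
  then have "a * b = 1" by (metis of_int_eq_1_iff of_int_mult)
  then show "x = 1 \<or> x = -1" using \<open>x = of_int a\<close> by (auto simp: zmult_eq_1_iff)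
qed

lemma matrix_eq_on_axes:
  "(B::real^2^2) *v axis 1 1 = C *v axis 1 1 \<Longrightarrow> B *v axis 2 1 = C *v axis 2 1 \<Longrightarrow> B = C"
  by (simp add: vec_eq_iff forall_2 matrix_vector_mult_def sum_2 axis_def)

lemma matrix_2x2_eq_iff:
  "(X::real^2^2) = Y \<longleftrightarrow> X$1$1 = Y$1$1 \<and> X$1$2 = Y$1$2 \<and> X$2$1 = Y$2$1 \<and> X$2$2 = Y$2$2"
  by (auto simp: vec_eq_iff forall_2)

lemma matrix_2x2_mult_nth: "((X::real^2^2) ** Y)$i$j = X$i$1 * Y$1$j + X$i$2 * Y$2$j"
  by (simp add: matrix_matrix_mult_def sum_2)

lemma power2_norm_matrix_2x2: "(norm (X::real^2^2))^2 = (X$1$1)^2 + (X$1$2)^2 + (X$2$1)^2 + (X$2$2)^2"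
  by (simp add: norm_vec_def L2_set_def sum_2 add.assoc add_nonneg_nonneg)

section \<open>The affine group\<close>

lemma aff_mult_pair [simp]: "aff_mult (a, B) (b, C) = (a + B *v b, B ** C)"
  by (simp add: aff_mult_def)

lemma aff_apply_pair [simp]: "aff_apply (a, B) x = a + B *v x"
  by (simp add: aff_apply_def)

lemma aff_apply_mult: "aff_apply (aff_mult g h) x = aff_apply g (aff_apply h x)"
  by (simp add: aff_apply_def aff_mult_def matrix_vector_mul_assoc matrix_vector_right_distrib add.assoc)

lemma matrix_inv_invertible:
  assumes "invertible (B::'a::semiring_1^'n^'m)"
  shows "B ** matrix_inv B = mat 1" "matrix_inv B ** B = mat 1"
proof -
  have "B ** matrix_inv B = mat 1 \<and> matrix_inv B ** B = mat 1"
    unfolding matrix_inv_def by (rule someI_ex) (use assms in \<open>simp add: invertible_def\<close>)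
  then show "B ** matrix_inv B = mat 1" "matrix_inv B ** B = mat 1" by auto
qed

lemma matrix_inv_unique:
  assumes "(B::real^'n^'n) ** C = mat 1"
  shows "matrix_inv B = C"
proof -
  have "C ** B = mat 1" using assms matrix_left_right_inverse by blast
  then have "invertible B" using assms by (auto simp: invertible_def)
  then have "matrix_inv B = (matrix_inv B ** B) ** C"
    by (metis assms matrix_mul_assoc matrix_mul_rid)
  then show ?thesis by (simp add: matrix_inv_invertible(2)[OF \<open>invertible B\<close>] matrix_mul_lid)
qed

lemma matrix_inv_mat_1 [simp]: "matrix_inv (mat 1 :: real^'n^'n) = mat 1"
  by (rule matrix_inv_unique) (simp add: matrix_mul_lid)

lemma AffGroup_simps [simp]:
  "carrier AffGroup = {g. invertible (snd g)}" "mult AffGroup = aff_mult" "one AffGroup = (0, mat 1)"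
  by (simp_all add: AffGroup_def)

lemma aff_inv_left: "invertible (snd g) \<Longrightarrow> aff_mult (aff_inv g) g = (0, mat 1)"
  and aff_inv_right: "invertible (snd g) \<Longrightarrow> aff_mult g (aff_inv g) = (0, mat 1)"
  by (auto simp: aff_inv_def aff_mult_def matrix_inv_invertible matrix_vector_mul_assoc)

lemma invertible_aff_inv: "invertible (snd g) \<Longrightarrow> invertible (snd (aff_inv g))"
  unfolding aff_inv_def using matrix_inv_invertible(1)[of "snd g"] invertible_left_inverse by auto

lemma group_AffGroup: "group AffGroup"
proof (rule groupI)
  fix x y z :: aff
  show "x \<otimes>\<^bsub>AffGroup\<^esub> y \<otimes>\<^bsub>AffGroup\<^esub> z = x \<otimes>\<^bsub>AffGroup\<^esub> (y \<otimes>\<^bsub>AffGroup\<^esub> z)"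
    by (simp add: aff_mult_def matrix_vector_mul_assoc matrix_vector_right_distrib matrix_mul_assoc add.assoc)
  show "\<one>\<^bsub>AffGroup\<^esub> \<otimes>\<^bsub>AffGroup\<^esub> x = x"
    by (simp add: aff_mult_def matrix_mul_lid)
  show "\<one>\<^bsub>AffGroup\<^esub> \<in> carrier AffGroup"
    by (auto simp: invertible_def matrix_mul_lid)
  assume "x \<in> carrier AffGroup"
  then show "\<exists>y\<in>carrier AffGroup. y \<otimes>\<^bsub>AffGroup\<^esub> x = \<one>\<^bsub>AffGroup\<^esub>"
    using aff_inv_left[of x] invertible_aff_inv[of x] by (intro bexI[of _ "aff_inv x"]) auto
  assume "y \<in> carrier AffGroup"
  with \<open>x \<in> carrier AffGroup\<close> show "x \<otimes>\<^bsub>AffGroup\<^esub> y \<in> carrier AffGroup"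
    by (simp add: aff_mult_def invertible_mult)
qed

lemma inv_AffGroup: "invertible (snd g) \<Longrightarrow> inv\<^bsub>AffGroup\<^esub> g = aff_inv g"
  by (rule group.inv_equality[OF group_AffGroup]) (simp_all add: aff_inv_left invertible_aff_inv)

lemma aff_apply_aff_inv:
  "invertible (snd g) \<Longrightarrow> aff_apply (aff_inv g) (aff_apply g x) = x"
  "invertible (snd g) \<Longrightarrow> aff_apply g (aff_apply (aff_inv g) x) = x"
  by (simp_all add: aff_apply_mult[symmetric] aff_inv_left aff_inv_right matrix_vector_mul_lid)

lemma klein4_invertible: "B \<in> klein4 \<Longrightarrow> invertible B"
  using klein4_involution by (auto simp: invertible_def)

lemma aff_inv_klein4 [simp]: "B \<in> klein4 \<Longrightarrow> aff_inv (a, B) = (- (B *v a), B)"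
  by (simp add: aff_inv_def matrix_inv_unique[OF klein4_involution])

lemma inv_AffGroup_klein4: "B \<in> klein4 \<Longrightarrow> inv\<^bsub>AffGroup\<^esub> (a, B) = (- (B *v a), B)"
  by (simp add: inv_AffGroup klein4_invertible)

lemma conj_aff_eq: "g \<in> carrier AffGroup \<Longrightarrow> conj_aff g m = g \<otimes>\<^bsub>AffGroup\<^esub> m \<otimes>\<^bsub>AffGroup\<^esub> inv\<^bsub>AffGroup\<^esub> g"
  by (simp add: conj_aff_def inv_AffGroup)

lemma aff_apply_conj_aff:
  "invertible (snd g) \<Longrightarrow> aff_apply (conj_aff g m) (aff_apply g x) = aff_apply g (aff_apply m x)"
  by (simp add: conj_aff_def aff_apply_mult aff_apply_aff_inv)

lemma conj_aff_translation:
  "invertible B \<Longrightarrow> conj_aff (a, B) (n, mat 1) = (B *v n, mat 1)"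
  by (simp add: conj_aff_def aff_inv_def matrix_mul_rid matrix_inv_invertible matrix_vector_mul_assoc)

lemma conj_aff_klein4:
  assumes "B \<in> klein4" "C \<in> point_group"
  shows "conj_aff (a, B) (n, C) = (a - C *v a + B *v n, C)"
proof -
  have "B ** C ** B = C"
    using assms klein4_commute[OF _ subsetD[OF point_group_subset_klein4]] klein4_involution
    by (metis matrix_mul_assoc matrix_mul_lid)
  then show ?thesis
    using assms by (simp add: conj_aff_def matrix_vector_mul_assoc del: matrix_mul_assoc)
qed

lemma NA_subgroup:
  assumes "M \<subseteq> carrier AffGroup"
  shows "subgroup (NA M) AffGroup"
proof -
  interpret A: group AffGroup by (rule group_AffGroup)
  have conj_mult: "conj_aff (g \<otimes>\<^bsub>AffGroup\<^esub> h) m = conj_aff g (conj_aff h m)"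
    if "g \<in> carrier AffGroup" "h \<in> carrier AffGroup" "m \<in> carrier AffGroup" for g h m
    using that by (simp add: conj_aff_eq A.inv_mult_group A.m_assoc del: AffGroup_simps)
  have conj_inv: "conj_aff (inv\<^bsub>AffGroup\<^esub> g) (conj_aff g m) = m"
    if "g \<in> carrier AffGroup" "m \<in> carrier AffGroup" for g m
    using that by (simp add: conj_aff_eq A.m_assoc del: AffGroup_simps)
      (simp add: A.m_assoc[symmetric] del: AffGroup_simps)
  show ?thesis
  proof (rule A.subgroupI)
    show "NA M \<subseteq> carrier AffGroup" by (auto simp: NA_def)
    have "conj_aff (0, mat 1) m = m" for m
      by (cases m) (simp add: conj_aff_def aff_inv_def matrix_mul_lid matrix_mul_rid matrix_vector_mul_lid)
    then have "\<one>\<^bsub>AffGroup\<^esub> \<in> NA M"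
      using A.one_closed by (simp add: NA_def del: AffGroup_simps) simp
    then show "NA M \<noteq> {}" by blast
  next
    fix g assume g: "g \<in> NA M"
    then have gc: "g \<in> carrier AffGroup" and img: "conj_aff g ` M = M" by (auto simp: NA_def)
    have "conj_aff (inv\<^bsub>AffGroup\<^esub> g) ` M = conj_aff (inv\<^bsub>AffGroup\<^esub> g) ` conj_aff g ` M"
      using img by simp
    also have "\<dots> = M"
      using conj_inv[OF gc] assms by (force simp: image_image simp del: AffGroup_simps)
    finally show "inv\<^bsub>AffGroup\<^esub> g \<in> NA M" using gc by (simp add: NA_def del: AffGroup_simps)
  next
    fix g h assume "g \<in> NA M" "h \<in> NA M"
    then have gh: "g \<in> carrier AffGroup" "h \<in> carrier AffGroup"
      and img: "conj_aff g ` M = M" "conj_aff h ` M = M" by (auto simp: NA_def)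
    have "conj_aff (g \<otimes>\<^bsub>AffGroup\<^esub> h) ` M = conj_aff g ` conj_aff h ` M"
      using conj_mult[OF gh] assms by (force simp: image_image simp del: AffGroup_simps)
    then show "g \<otimes>\<^bsub>AffGroup\<^esub> h \<in> NA M"
      using img gh by (simp add: NA_def del: AffGroup_simps)
  qed
qed

lemma NA_invertible: "g \<in> NA M \<Longrightarrow> invertible (snd g)"
  by (simp add: NA_def)

section \<open>Orbit spaces of subgroups of the affine group\<close>

lemma carrier_Mgrp [simp]: "carrier (Mgrp M) = M"
  by (simp add: Mgrp_def)

lemma orbit_of_NA:
  assumes "g \<in> NA M"
  shows "orbit_of M (aff_apply g x) = aff_apply g ` orbit_of M x"
proof -
  have "orbit_of M (aff_apply g x) = (\<lambda>m. aff_apply m (aff_apply g x)) ` conj_aff g ` M"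
    using assms by (simp add: orbit_of_def NA_def)
  also have "\<dots> = (\<lambda>m. aff_apply (conj_aff g m) (aff_apply g x)) ` M"
    by (simp add: image_image)
  also have "\<dots> = aff_apply g ` orbit_of M x"
    using NA_invertible[OF assms] by (simp add: orbit_of_def aff_apply_conj_aff image_image)
  finally show ?thesis .
qed

lemma Orb_cases: "X \<in> Orb M \<Longrightarrow> (\<And>x. X = orbit_of M x \<Longrightarrow> P) \<Longrightarrow> P"
  by (auto simp: Orb_def)

lemma orbit_of_in_Orb [simp]: "orbit_of M x \<in> Orb M"
  by (simp add: Orb_def)

lemma orb_dist_le: "p \<in> X \<Longrightarrow> q \<in> Y \<Longrightarrow> orb_dist X Y \<le> dist p q"
  unfolding orb_dist_def by (rule cInf_lower) (auto intro: bdd_belowI[of _ 0])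

lemma orb_dist_ge:
  "p \<in> X \<Longrightarrow> q \<in> Y \<Longrightarrow> (\<And>p q. p \<in> X \<Longrightarrow> q \<in> Y \<Longrightarrow> d \<le> dist p q) \<Longrightarrow> d \<le> orb_dist X Y"
  unfolding orb_dist_def by (rule cInf_greatest) auto

lemma orb_dist_self: "x \<in> X \<Longrightarrow> orb_dist X X = 0"
  using orb_dist_le[of x X x X] orb_dist_ge[of x X x X 0] by simp

lemma sym_dist_le: "(\<And>X. X \<in> Orb M \<Longrightarrow> orb_dist (\<phi> X) (\<psi> X) \<le> e) \<Longrightarrow> sym_dist M \<phi> \<psi> \<le> e"
  unfolding sym_dist_def by (rule cSup_least) (auto simp: Orb_def)

lemma norm_orthogonal_matrix_mult: "orthogonal_matrix Q \<Longrightarrow> norm (Q *v v) = norm (v::real^'n)"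
  using orthogonal_transformation_matrix[of "(*v) Q"] orthogonal_transformation_norm by auto

context
  fixes M assumes M: "subgroup M AffGroup"
begin

lemma subgroup_NA: "subgroup (NA M) AffGroup"
  by (rule NA_subgroup[OF subgroup.subset[OF M]])

lemma orbit_of_self: "x \<in> orbit_of M x"
proof -
  have "aff_apply (0, mat 1) x \<in> orbit_of M x"
    unfolding orbit_of_def using subgroup.one_closed[OF M] by (intro imageI) simp
  then show ?thesis by (simp add: matrix_vector_mul_lid)
qed

lemma orbit_of_eq:
  assumes "y \<in> orbit_of M x"
  shows "orbit_of M y = orbit_of M x"
proof -
  interpret M: subgroup M AffGroup by (rule M)
  obtain m where m: "m \<in> M" "y = aff_apply m x" using assms by (auto simp: orbit_of_def)
  have "(\<lambda>n. n \<otimes>\<^bsub>AffGroup\<^esub> m) ` M = M"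
    using M.rcos_const[OF group_AffGroup m(1)] by (auto simp: r_coset_def simp del: AffGroup_simps)
  then have "(\<lambda>n. aff_apply n x) ` (\<lambda>n. aff_mult n m) ` M = orbit_of M x"
    by (simp add: orbit_of_def)
  then show ?thesis by (simp add: orbit_of_def m aff_apply_mult image_image)
qed

lemma star_orbit:
  assumes "g \<in> NA M"
  shows "star M g (orbit_of M x) = orbit_of M (aff_apply g x)"
proof -
  define y where "y = (SOME y. y \<in> orbit_of M x)"
  have "y \<in> orbit_of M x" unfolding y_def using orbit_of_self by (rule someI)
  then have "orbit_of M (aff_apply g y) = orbit_of M (aff_apply g x)"
    using orbit_of_eq by (simp add: orbit_of_NA[OF assms])
  then show ?thesis by (simp add: star_def y_def)
qed

lemma star_in_Orb: "g \<in> NA M \<Longrightarrow> X \<in> Orb M \<Longrightarrow> star M g X \<in> Orb M"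
  by (auto elim: Orb_cases simp: star_orbit)

lemma subset_NA: "M \<subseteq> NA M"
proof
  interpret M: subgroup M AffGroup by (rule M)
  interpret A: group AffGroup by (rule group_AffGroup)
  fix m assume m: "m \<in> M"
  have "conj_aff m ` M \<subseteq> M"
    using m by (auto simp: conj_aff_eq simp del: AffGroup_simps)
  moreover have "n \<in> conj_aff m ` M" if "n \<in> M" for n
  proof
    show "n = conj_aff m (inv\<^bsub>AffGroup\<^esub> m \<otimes>\<^bsub>AffGroup\<^esub> n \<otimes>\<^bsub>AffGroup\<^esub> m)"
      using m that by (simp add: conj_aff_eq A.m_assoc del: AffGroup_simps)
        (simp add: A.m_assoc[symmetric] del: AffGroup_simps)
  qed (use m that in \<open>simp del: AffGroup_simps\<close>)
  ultimately show "m \<in> NA M" using M.mem_carrier[OF m] by (auto simp: NA_def)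
qed

lemma star_of_mem: "m \<in> M \<Longrightarrow> star M m = (\<lambda>X\<in>Orb M. X)"
proof
  fix X assume m: "m \<in> M"
  then have "m \<in> NA M" using subset_NA by blast
  show "star M m X = (\<lambda>X\<in>Orb M. X) X"
  proof (cases "X \<in> Orb M")
    case True
    then obtain x where "X = orbit_of M x" by (rule Orb_cases)
    moreover have "aff_apply m x \<in> orbit_of M x" using m by (simp add: orbit_of_def)
    ultimately show ?thesis
      using \<open>m \<in> NA M\<close> orbit_of_eq by (simp add: star_orbit)
  qed (simp add: star_def)
qed

lemma star_one: "star M (0, mat 1) = (\<lambda>X\<in>Orb M. X)"
  using star_of_mem subgroup.one_closed[OF M] by simp

lemma star_mult:
  assumes "g \<in> NA M" "h \<in> NA M"
  shows "compose (Orb M) (star M g) (star M h) = star M (aff_mult g h)"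
proof
  fix X
  have gh: "aff_mult g h \<in> NA M"
    using subgroup.m_closed[OF subgroup_NA assms] by simp
  show "compose (Orb M) (star M g) (star M h) X = star M (aff_mult g h) X"
  proof (cases "X \<in> Orb M")
    case True
    then show ?thesis by (auto elim!: Orb_cases simp: compose_def star_orbit assms gh aff_apply_mult)
  qed (simp add: compose_def star_def)
qed

lemma star_Bij:
  assumes g: "g \<in> NA M"
  shows "star M g \<in> Bij (Orb M)"
proof -
  interpret N: subgroup "NA M" AffGroup by (rule subgroup_NA)
  have gi: "inv\<^bsub>AffGroup\<^esub> g \<in> NA M" using g by (rule N.m_inv_closed)
  have inverse: "compose (Orb M) (star M g) (star M (inv\<^bsub>AffGroup\<^esub> g)) = (\<lambda>X\<in>Orb M. X)"
    "compose (Orb M) (star M (inv\<^bsub>AffGroup\<^esub> g)) (star M g) = (\<lambda>X\<in>Orb M. X)"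
    using star_mult[OF g gi] star_mult[OF gi g] star_one
      group.r_inv[OF group_AffGroup N.mem_carrier[OF g]] group.l_inv[OF group_AffGroup N.mem_carrier[OF g]]
    by simp_all
  have "bij_betw (star M g) (Orb M) (Orb M)"
  proof (rule bij_betwI[where g = "star M (inv\<^bsub>AffGroup\<^esub> g)"])
    show "star M g \<in> Orb M \<rightarrow> Orb M" "star M (inv\<^bsub>AffGroup\<^esub> g) \<in> Orb M \<rightarrow> Orb M"
      using star_in_Orb[OF g] star_in_Orb[OF gi] by auto
    show "star M (inv\<^bsub>AffGroup\<^esub> g) (star M g X) = X" "star M g (star M (inv\<^bsub>AffGroup\<^esub> g) X) = X"
      if "X \<in> Orb M" for X
      using fun_cong[OF inverse(2), of X] fun_cong[OF inverse(1), of X] that by (simp_all add: compose_def)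
  qed
  then show ?thesis by (simp add: Bij_def star_def)
qed

lemma star_hom: "star M \<in> hom (AffGroup\<lparr>carrier := NA M\<rparr>) (BijGroup (Orb M))"
  by (rule homI) (simp_all add: BijGroup_def star_Bij star_mult)

lemma star_mult_mem:
  assumes "g \<in> NA M" "m \<in> M"
  shows "star M (aff_mult g m) = star M g"
proof -
  have "m \<in> NA M" using subset_NA assms(2) by blast
  then have "star M (aff_mult g m) = compose (Orb M) (star M g) (star M m)"
    using star_mult[OF assms(1)] by simp
  also have "\<dots> = compose (Orb M) (star M g) (\<lambda>X\<in>Orb M. X)"
    using star_of_mem[OF assms(2)] by simp
  also have "\<dots> = star M g" by (rule ext) (simp add: compose_def star_def)
  finally show ?thesis .
qed

lemma star_isometry:
  assumes g: "g \<in> NA M" and Q: "orthogonal_matrix (snd g)" and XY: "X \<in> Orb M" "Y \<in> Orb M"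
  shows "orb_dist (star M g X) (star M g Y) = orb_dist X Y"
proof -
  have iso: "dist (aff_apply g p) (aff_apply g q) = dist p q" for p q
    using norm_orthogonal_matrix_mult[OF Q, of "p - q"]
    by (cases g) (simp add: dist_norm matrix_vector_mult_diff_distrib)
  have image: "star M g Z = aff_apply g ` Z" if "Z \<in> Orb M" for Z
    using that g by (auto elim!: Orb_cases simp: star_orbit orbit_of_NA)
  have "{dist p q |p q. p \<in> aff_apply g ` X \<and> q \<in> aff_apply g ` Y} = {dist p q |p q. p \<in> X \<and> q \<in> Y}"
  proof (intro equalityI subsetI)
    fix d assume "d \<in> {dist p q |p q. p \<in> X \<and> q \<in> Y}"
    then obtain p q where "d = dist p q" "p \<in> X" "q \<in> Y" by blast
    then have "d = dist (aff_apply g p) (aff_apply g q)" "aff_apply g p \<in> aff_apply g ` X"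
      "aff_apply g q \<in> aff_apply g ` Y" by (simp_all add: iso)
    then show "d \<in> {dist p q |p q. p \<in> aff_apply g ` X \<and> q \<in> aff_apply g ` Y}" by blast
  qed (auto simp: iso, blast)
  then show ?thesis by (simp add: orb_dist_def image XY)
qed

lemma Mgrp_group: "group (Mgrp M)"
  unfolding Mgrp_def by (rule group.subgroup_imp_group[OF group_AffGroup M])

lemma conj_aut_auto:
  assumes g: "g \<in> NA M"
  shows "conj_aut M g \<in> auto (Mgrp M)"
proof -
  interpret A: group AffGroup by (rule group_AffGroup)
  have gc: "g \<in> carrier AffGroup" and img: "conj_aff g ` M = M" using g by (auto simp: NA_def)
  have Mc: "m \<in> carrier AffGroup" if "m \<in> M" for m using subgroup.subset[OF M] that by blast
  have cancel: "inv\<^bsub>AffGroup\<^esub> g \<otimes>\<^bsub>AffGroup\<^esub> (g \<otimes>\<^bsub>AffGroup\<^esub> z) = z"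
    if "z \<in> carrier AffGroup" for z
    using gc that by (simp add: A.m_assoc[symmetric] del: AffGroup_simps)
  have "conj_aff g (x \<otimes>\<^bsub>AffGroup\<^esub> y) = conj_aff g x \<otimes>\<^bsub>AffGroup\<^esub> conj_aff g y"
    if "x \<in> M" "y \<in> M" for x y
    using gc Mc[OF that(1)] Mc[OF that(2)]
    by (simp add: conj_aff_eq A.m_assoc cancel del: AffGroup_simps)
  then have hom: "conj_aff g (aff_mult x y) = aff_mult (conj_aff g x) (conj_aff g y)"
    if "x \<in> M" "y \<in> M" for x y
    using that by simp
  have "inj_on (conj_aff g) M"
    by (rule inj_onI) (use gc Mc in \<open>simp add: conj_aff_eq del: AffGroup_simps\<close>)
  then have "conj_aut M g \<in> Bij M"
    using img by (simp add: Bij_def conj_aut_def bij_betw_def)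
  moreover have "conj_aut M g \<in> hom (Mgrp M) (Mgrp M)"
    using img hom subgroup.m_closed[OF M] by (auto intro!: homI simp: Mgrp_def conj_aut_def)
  ultimately show ?thesis by (simp add: auto_def Mgrp_def)
qed

lemma conj_aut_mult:
  assumes "g \<in> NA M" "h \<in> NA M"
  shows "conj_aut M (aff_mult g h) = conj_aut M g \<otimes>\<^bsub>AutoGroup (Mgrp M)\<^esub> conj_aut M h"
proof -
  interpret A: group AffGroup by (rule group_AffGroup)
  have gh: "g \<in> carrier AffGroup" "h \<in> carrier AffGroup" using assms by (auto simp: NA_def)
  have "conj_aff (g \<otimes>\<^bsub>AffGroup\<^esub> h) m = conj_aff g (conj_aff h m)" if "m \<in> M" for m
    using gh subgroup.mem_carrier[OF M that]
    by (simp add: conj_aff_eq A.inv_mult_group A.m_assoc del: AffGroup_simps)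
  moreover have "conj_aff h m \<in> M" if "m \<in> M" for m
    using assms(2) that by (auto simp: NA_def)
  ultimately show ?thesis
    using conj_aut_auto[OF assms(1)] conj_aut_auto[OF assms(2)]
    by (auto simp: AutoGroup_def BijGroup_def auto_def Mgrp_def conj_aut_def compose_def)
qed

lemma conj_aut_group_hom: "group_hom (AffGroup\<lparr>carrier := NA M\<rparr>) (AutoGroup (Mgrp M)) (conj_aut M)"
proof -
  have "conj_aut M \<in> hom (AffGroup\<lparr>carrier := NA M\<rparr>) (AutoGroup (Mgrp M))"
    by (rule homI) (simp_all add: AutoGroup_def conj_aut_auto conj_aut_mult)
  then show ?thesis
    using group.subgroup_imp_group[OF group_AffGroup subgroup_NA]
      group.AutoGroup[OF Mgrp_group]
    by (simp add: group_hom_def group_hom_axioms_def)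
qed

lemma Inn_subgroup: "subgroup (Inn M) (AutoGroup (Mgrp M))"
proof -
  interpret c: group_hom "AffGroup\<lparr>carrier := NA M\<rparr>" "AutoGroup (Mgrp M)" "conj_aut M"
    by (rule conj_aut_group_hom)
  have "subgroup M (AffGroup\<lparr>carrier := NA M\<rparr>)"
    by (rule group.subgroup_incl[OF group_AffGroup M subgroup_NA subset_NA])
  then show ?thesis unfolding Inn_def by (rule c.subgroup_img_is_subgroup)
qed

lemma auto_conj_aff:
  assumes \<phi>: "\<phi> \<in> auto (Mgrp M)" and m: "m \<in> M" and x: "x \<in> M"
  shows "\<phi> (conj_aff m x) = conj_aff (\<phi> m) (\<phi> x)"
proof -
  interpret Mg: group "Mgrp M" by (rule Mgrp_group)
  interpret \<phi>: group_hom "Mgrp M" "Mgrp M" \<phi>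
    using \<phi> by (simp add: group_hom_def group_hom_axioms_def auto_def Mg.group_axioms)
  have conj: "conj_aff n y = n \<otimes>\<^bsub>Mgrp M\<^esub> y \<otimes>\<^bsub>Mgrp M\<^esub> inv\<^bsub>Mgrp M\<^esub> n" if "n \<in> M" for n y
    using group.m_inv_consistent[OF group_AffGroup M that] subgroup.mem_carrier[OF M that]
    by (simp add: conj_aff_eq Mgrp_def del: AffGroup_simps)
  have mx: "m \<in> carrier (Mgrp M)" "x \<in> carrier (Mgrp M)" "\<phi> m \<in> M" using m x \<phi>.hom_closed by simp_all
  then have "\<phi> (m \<otimes>\<^bsub>Mgrp M\<^esub> x \<otimes>\<^bsub>Mgrp M\<^esub> inv\<^bsub>Mgrp M\<^esub> m)
      = \<phi> (m \<otimes>\<^bsub>Mgrp M\<^esub> x) \<otimes>\<^bsub>Mgrp M\<^esub> \<phi> (inv\<^bsub>Mgrp M\<^esub> m)"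
    by (intro \<phi>.hom_mult Mg.m_closed Mg.inv_closed)
  then show ?thesis using mx by (simp add: conj \<phi>.hom_mult \<phi>.hom_inv)
qed

lemma auto_mult_conj_aut:
  assumes \<phi>: "\<phi> \<in> auto (Mgrp M)" and m: "m \<in> M"
  shows "\<phi> \<otimes>\<^bsub>AutoGroup (Mgrp M)\<^esub> conj_aut M m = conj_aut M (\<phi> m) \<otimes>\<^bsub>AutoGroup (Mgrp M)\<^esub> \<phi>"
proof -
  have \<phi>m: "\<phi> m \<in> M" using \<phi> m by (auto simp: auto_def hom_def Mgrp_def)
  have "conj_aff m x \<in> M" if "x \<in> M" for x
    using subset_NA m that by (auto simp: NA_def)
  moreover have "\<phi> x \<in> M" if "x \<in> M" for x
    using \<phi> that by (auto simp: auto_def hom_def Mgrp_def)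
  ultimately show ?thesis
    using \<phi> conj_aut_auto[OF subsetD[OF subset_NA m]] conj_aut_auto[OF subsetD[OF subset_NA \<phi>m]]
      auto_conj_aff[OF \<phi> m]
    by (auto simp: AutoGroup_def BijGroup_def auto_def Mgrp_def conj_aut_def compose_def)
qed

lemma Inn_normal: "Inn M \<lhd> AutoGroup (Mgrp M)"
proof -
  interpret Aut: group "AutoGroup (Mgrp M)" by (rule group.AutoGroup[OF Mgrp_group])
  show ?thesis
  proof (rule Aut.normal_inv_iff[THEN iffD2], intro conjI ballI Inn_subgroup)
    fix \<phi> \<psi> assume \<phi>: "\<phi> \<in> carrier (AutoGroup (Mgrp M))" and "\<psi> \<in> Inn M"
    then obtain m where m: "m \<in> M" "\<psi> = conj_aut M m" by (auto simp: Inn_def)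
    have "\<phi> m \<in> M" using \<phi> m(1) by (auto simp: AutoGroup_def auto_def hom_def Mgrp_def)
    then have c: "conj_aut M (\<phi> m) \<in> Inn M" by (simp add: Inn_def)
    have "\<phi> \<otimes>\<^bsub>AutoGroup (Mgrp M)\<^esub> \<psi> \<otimes>\<^bsub>AutoGroup (Mgrp M)\<^esub> inv\<^bsub>AutoGroup (Mgrp M)\<^esub> \<phi>
        = conj_aut M (\<phi> m) \<otimes>\<^bsub>AutoGroup (Mgrp M)\<^esub> \<phi> \<otimes>\<^bsub>AutoGroup (Mgrp M)\<^esub> inv\<^bsub>AutoGroup (Mgrp M)\<^esub> \<phi>"
      using auto_mult_conj_aut[of \<phi> m] \<phi> m by (simp add: AutoGroup_def)
    also have "\<dots> = conj_aut M (\<phi> m)"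
      using \<phi> subgroup.mem_carrier[OF Inn_subgroup c] by (simp add: Aut.m_assoc)
    finally show "\<phi> \<otimes>\<^bsub>AutoGroup (Mgrp M)\<^esub> \<psi> \<otimes>\<^bsub>AutoGroup (Mgrp M)\<^esub> inv\<^bsub>AutoGroup (Mgrp M)\<^esub> \<phi> \<in> Inn M"
      using c by simp
  qed
qed

end

lemma (in group) rcos_eq_iff:
  assumes "subgroup H G" "x \<in> carrier G" "y \<in> carrier G"
  shows "H #> x = H #> y \<longleftrightarrow> x \<otimes> inv y \<in> H"
  using repr_independence[OF _ assms(3,1)] repr_independenceD[OF assms(1,2)]
    subgroup.rcos_module[OF assms(1) is_group assms(3,2)] by metis

lemma hom_eq_on_generate:
  assumes "group G" "group H" "f \<in> hom G H" "g \<in> hom G H" "S \<subseteq> carrier G"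
    and "\<And>s. s \<in> S \<Longrightarrow> f s = g s" and "x \<in> generate G S"
  shows "f x = g x"
proof -
  interpret f: group_hom G H f using assms(1-3) by (simp add: group_hom_def group_hom_axioms_def)
  interpret g: group_hom G H g using assms(1,2,4) by (simp add: group_hom_def group_hom_axioms_def)
  from assms(7) show ?thesis
  proof (induction rule: generate.induct)
    case (inv h)
    then show ?case using assms(5,6) by auto
  next
    case (eng h1 h2)
    then have "h1 \<in> carrier G" "h2 \<in> carrier G"
      using group.generate_in_carrier[OF assms(1,5)] by auto
    then show ?case using eng.IH by simp
  qed (use assms(6) in simp_all)
qed

section \<open>The group M, its normalizer and its automorphisms\<close>

lemma subgroup_Mcm: "subgroup Mcm AffGroup"
  unfolding Mcm_def
  by (rule group.generate_is_subgroup[OF group_AffGroup]) (auto simp: klein4_invertible)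

lemma Mcm_translation_multiples:
  assumes "(v, mat 1) \<in> Mcm"
  shows "(of_int k *\<^sub>R v, mat 1) \<in> Mcm"
proof (induction k rule: int_induct[where k = 0])
  case base
  show ?case using subgroup.one_closed[OF subgroup_Mcm] by simp
next
  case (step1 i)
  have "aff_mult (of_int i *\<^sub>R v, mat 1) (v, mat 1) = (of_int (i + 1) *\<^sub>R v, mat 1)"
    by (simp add: matrix_vector_mul_lid matrix_mul_lid algebra_simps)
  then show ?case using subgroup.m_closed[OF subgroup_Mcm step1(2) assms] by simp
next
  case (step2 i)
  have "inv\<^bsub>AffGroup\<^esub> (v, mat 1) = (- v, mat 1)"
    using inv_AffGroup_klein4[of "mat 1" v] by (simp add: matrix_vector_mul_lid)
  then have "(- v, mat 1) \<in> Mcm" using subgroup.m_inv_closed[OF subgroup_Mcm assms] by simp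
  then have "(of_int i *\<^sub>R v, mat 1) \<otimes>\<^bsub>AffGroup\<^esub> (- v, mat 1) \<in> Mcm"
    by (rule subgroup.m_closed[OF subgroup_Mcm step2(2)])
  then show ?case by (simp add: matrix_vector_mul_lid matrix_mul_lid algebra_simps)
qed

lemma subgroup_int_lattice_point_group: "subgroup (int_lattice \<times> point_group) AffGroup"
proof (rule group.subgroupI[OF group_AffGroup])
  show "int_lattice \<times> point_group \<subseteq> carrier AffGroup"
    using point_group_subset_klein4 klein4_invertible by auto
next
  fix g assume "g \<in> int_lattice \<times> point_group"
  then show "inv\<^bsub>AffGroup\<^esub> g \<in> int_lattice \<times> point_group"
    using point_group_subset_klein4
    by (auto simp: inv_AffGroup klein4_invertible int_lattice_klein4 int_lattice_uminus)
next
  fix g h assume "g \<in> int_lattice \<times> point_group" "h \<in> int_lattice \<times> point_group"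
  then show "g \<otimes>\<^bsub>AffGroup\<^esub> h \<in> int_lattice \<times> point_group"
    using point_group_subset_klein4
    by (auto simp: aff_mult_def int_lattice_add int_lattice_klein4 point_group_def matrix_mul_lid matrix_mul_rid)
qed (use int_lattice_0 point_group_simps(1) in blast)

lemma Mcm_eq: "Mcm = int_lattice \<times> point_group"
proof
  show "Mcm \<subseteq> int_lattice \<times> point_group"
    using subgroup_int_lattice_point_group
    unfolding Mcm_def by (rule group.generate_subgroup_incl[OF group_AffGroup, rotated])
      (auto simp: point_group_def)
next
  show "int_lattice \<times> point_group \<subseteq> Mcm"
  proof clarify
    fix n B assume n: "n \<in> int_lattice" and B: "B \<in> point_group"
    obtain i j where ij: "n$1 = of_int i" "n$2 = of_int j"
      using n by (auto simp: int_lattice_def elim!: Ints_cases)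
    have gens: "(axis 1 1, mat 1) \<in> Mcm" "(axis 2 1, mat 1) \<in> Mcm" "(0, matA) \<in> Mcm"
      unfolding Mcm_def by (auto intro: generate.incl)
    have "(of_int i *\<^sub>R axis 1 1, mat 1) \<otimes>\<^bsub>AffGroup\<^esub> (of_int j *\<^sub>R axis 2 1, mat 1) \<in> Mcm"
      by (rule subgroup.m_closed[OF subgroup_Mcm Mcm_translation_multiples[OF gens(1)]
            Mcm_translation_multiples[OF gens(2)]])
    moreover have "of_int i *\<^sub>R axis 1 1 + of_int j *\<^sub>R axis 2 1 = n"
      using ij by (simp add: vec_eq_iff forall_2 axis_def)
    ultimately have nI: "(n, mat 1) \<in> Mcm" by (simp add: matrix_vector_mul_lid matrix_mul_lid)
    show "(n, B) \<in> Mcm"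
    proof (cases "B = mat 1")
      case False
      then have "B = matA" using B by (simp add: point_group_def)
      then show ?thesis
        using subgroup.m_closed[OF subgroup_Mcm nI gens(3)] by (simp add: matrix_mul_lid)
    qed (use nI in simp)
  qed
qed

lemma Mcm_generate: "generate (Mgrp Mcm) {(axis 1 1, mat 1), (axis 2 1, mat 1), (0, matA)} = Mcm"
proof -
  have "{(axis 1 1, mat 1), (axis 2 1, mat 1), (0, matA)} \<subseteq> Mcm" by (simp add: Mcm_eq)
  from group.generate_consistent[OF group_AffGroup this subgroup_Mcm] show ?thesis
    by (metis Mcm_def Mgrp_def)
qed

lemma lattice_plus_diag_reflection:
  "a \<in> lattice_plus_diag \<Longrightarrow> C \<in> point_group \<Longrightarrow> a - C *v a \<in> int_lattice"
  by (auto simp: point_group_def lattice_plus_diag_def int_lattice_def matrix_vector_mul_lid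
      Ints_diff_commute)

lemma NA_Mcm_supset: "lattice_plus_diag \<times> klein4 \<subseteq> NA Mcm"
proof clarify
  fix a B assume a: "a \<in> lattice_plus_diag" and B: "B \<in> klein4"
  have "conj_aff (a, B) ` Mcm \<subseteq> Mcm"
    using a B by (auto simp: Mcm_eq conj_aff_klein4 int_lattice_add int_lattice_klein4
        lattice_plus_diag_reflection)
  moreover have "x \<in> conj_aff (a, B) ` Mcm" if x: "x \<in> Mcm" for x
  proof -
    obtain n C where nC: "x = (n, C)" "n \<in> int_lattice" "C \<in> point_group" using x by (auto simp: Mcm_eq)
    define n' where "n' = B *v (n - (a - C *v a))"
    have "n' \<in> int_lattice"
      unfolding n'_def using a B nC
      by (simp add: int_lattice_klein4 int_lattice_diff lattice_plus_diag_reflection)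
    moreover have "B *v n' = n - (a - C *v a)"
      using klein4_involution[OF B] by (simp add: n'_def matrix_vector_mul_assoc matrix_vector_mul_lid)
    ultimately show ?thesis
      using a B nC conj_aff_klein4[OF B nC(3), of a n'] by (auto simp: Mcm_eq intro!: image_eqI)
  qed
  ultimately show "(a, B) \<in> NA Mcm"
    using klein4_invertible[OF B] by (auto simp: NA_def)
qed

definition antidiag :: "real \<Rightarrow> real^2" where
  "antidiag j = vector [j, - j]"

lemma antidiag_nth [simp]: "antidiag j $ 1 = j" "antidiag j $ 2 = - j"
  by (simp_all add: antidiag_def vector_2)

lemma matA_antidiag [simp]: "matA *v antidiag j = - antidiag j"
  by (simp add: vec_eq_iff forall_2)

definition std_auto :: "real^2^2 \<Rightarrow> real \<Rightarrow> aff \<Rightarrow> aff" where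
  "std_auto B j = (\<lambda>x\<in>Mcm. (B *v fst x + (if snd x = mat 1 then 0 else antidiag j), snd x))"

lemma conj_aut_Mcm:
  assumes "(a, B) \<in> lattice_plus_diag \<times> klein4"
  shows "conj_aut Mcm (a, B) = std_auto B (a$1 - a$2)"
proof -
  have "conj_aff (a, B) x = (B *v fst x + (if snd x = mat 1 then 0 else antidiag (a$1 - a$2)), snd x)"
    if "x \<in> Mcm" for x
  proof -
    have "a - matA *v a = antidiag (a$1 - a$2)" by (simp add: vec_eq_iff forall_2)
    then show ?thesis
      using that assms conj_aff_klein4[of B "snd x" a "fst x"]
      by (cases x) (auto simp: Mcm_eq point_group_def matrix_vector_mul_lid add.commute)
  qed
  then show ?thesis unfolding conj_aut_def std_auto_def by (rule restrict_ext)
qed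

lemma std_auto_hom:
  assumes "B ** matA = matA ** B"
  shows "std_auto B j \<in> hom (Mgrp Mcm) AffGroup"
proof (rule homI)
  fix x assume "x \<in> carrier (Mgrp Mcm)"
  then show "std_auto B j x \<in> carrier AffGroup"
    using point_group_subset_klein4 klein4_invertible by (auto simp: std_auto_def Mcm_eq)
next
  fix x y assume "x \<in> carrier (Mgrp Mcm)" "y \<in> carrier (Mgrp Mcm)"
  then obtain n C m D where xy: "x = (n, C)" "y = (m, D)" "C \<in> point_group" "D \<in> point_group"
    "(n, C) \<in> Mcm" "(m, D) \<in> Mcm" by (auto simp: Mcm_eq)
  have BC: "B *v (C *v m) = C *v (B *v m)"
    using xy(3) assms by (auto simp: point_group_def matrix_vector_mul_assoc matrix_vector_mul_lid)
  have "(n, C) \<otimes>\<^bsub>Mgrp Mcm\<^esub> (m, D) \<in> Mcm"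
    using subgroup.m_closed[OF subgroup_Mcm xy(5,6)] by (simp add: Mgrp_def)
  then show "std_auto B j (x \<otimes>\<^bsub>Mgrp Mcm\<^esub> y) = std_auto B j x \<otimes>\<^bsub>AffGroup\<^esub> std_auto B j y"
    using xy BC
    by (auto simp: Mgrp_def std_auto_def point_group_def matrix_vector_right_distrib matrix_mul_lid
        matrix_mul_rid matrix_vector_mul_lid algebra_simps)
qed

text \<open>Translations are characterized by the group law alone, so automorphisms preserve them.\<close>

lemma Mcm_translation_iff:
  assumes "x \<in> Mcm"
  shows "snd x = mat 1 \<longleftrightarrow> (\<forall>y\<in>Mcm. aff_mult x (aff_mult y y) = aff_mult (aff_mult y y) x)"
proof
  assume "snd x = mat 1"
  then show "\<forall>y\<in>Mcm. aff_mult x (aff_mult y y) = aff_mult (aff_mult y y) x"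
    using assms
    by (auto simp: Mcm_eq point_group_def matrix_mul_lid matrix_mul_rid matrix_vector_mul_lid algebra_simps)
next
  assume commutes: "\<forall>y\<in>Mcm. aff_mult x (aff_mult y y) = aff_mult (aff_mult y y) x"
  show "snd x = mat 1"
  proof (rule ccontr)
    assume "snd x \<noteq> mat 1"
    then obtain n where x: "x = (n, matA)" using assms by (cases x) (auto simp: Mcm_eq point_group_def)
    have "(axis 1 1, mat 1) \<in> Mcm" by (simp add: Mcm_eq)
    then have "(n + matA *v (axis 1 1 + axis 1 1)) $ 1 = (axis 1 1 + axis 1 1 + n) $ 1"
      using commutes by (fastforce simp: x matrix_vector_mul_lid matrix_mul_lid)
    then show False by (simp add: axis_def)
  qed
qed

lemma auto_Mcm_hom:
  assumes h: "h \<in> auto (Mgrp Mcm)"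
  shows "\<And>x y. x \<in> Mcm \<Longrightarrow> y \<in> Mcm \<Longrightarrow> h (aff_mult x y) = aff_mult (h x) (h y)"
    and "\<And>x. x \<in> Mcm \<Longrightarrow> h x \<in> Mcm" and "h ` Mcm = Mcm"
    and "h (0, mat 1) = (0, mat 1)" and "h \<in> hom (Mgrp Mcm) AffGroup"
proof -
  interpret h: group_hom "Mgrp Mcm" "Mgrp Mcm" h
    using h Mgrp_group[OF subgroup_Mcm] by (simp add: group_hom_def group_hom_axioms_def auto_def)
  show "\<And>x y. x \<in> Mcm \<Longrightarrow> y \<in> Mcm \<Longrightarrow> h (aff_mult x y) = aff_mult (h x) (h y)"
    and closed: "\<And>x. x \<in> Mcm \<Longrightarrow> h x \<in> Mcm" and "h ` Mcm = Mcm"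
    using h by (auto simp: auto_def hom_def Mgrp_def Bij_def bij_betw_def)
  show "h (0, mat 1) = (0, mat 1)" using h.hom_one by (simp add: Mgrp_def)
  show "h \<in> hom (Mgrp Mcm) AffGroup"
    using h.hom_mult subgroup.mem_carrier[OF subgroup_Mcm closed] by (auto intro!: homI simp: Mgrp_def)
qed

lemma auto_Mcm_translation:
  assumes h: "h \<in> auto (Mgrp Mcm)" and x: "x \<in> Mcm" "snd x = mat 1"
  shows "snd (h x) = mat 1"
proof -
  note hom = auto_Mcm_hom[OF h]
  have "aff_mult (h x) (aff_mult y' y') = aff_mult (aff_mult y' y') (h x)" if "y' \<in> Mcm" for y'
  proof -
    obtain y where y: "y \<in> Mcm" "y' = h y" using hom(3) \<open>y' \<in> Mcm\<close> by blast
    have "aff_mult x (aff_mult y y) = aff_mult (aff_mult y y) x"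
      using Mcm_translation_iff[OF x(1)] x(2) y(1) by blast
    then have "h (aff_mult x (aff_mult y y)) = h (aff_mult (aff_mult y y) x)" by simp
    then show ?thesis
      using y x(1) subgroup.m_closed[OF subgroup_Mcm] by (simp add: hom(1))
  qed
  then show ?thesis using Mcm_translation_iff[OF hom(2)[OF x(1)]] by blast
qed

lemma auto_Mcm_reflection_snd:
  assumes h: "h \<in> auto (Mgrp Mcm)"
  shows "snd (h (0, matA)) = matA"
proof -
  note hom = auto_Mcm_hom[OF h]
  have A: "(0, matA) \<in> Mcm" by (simp add: Mcm_eq)
  have "snd (h (0, matA)) \<noteq> mat 1"
  proof
    assume hA: "snd (h (0, matA)) = mat 1"
    have "snd (h x) = mat 1" if x_in: "x \<in> Mcm" for x
    proof -
      obtain n C where x: "x = (n, C)" "n \<in> int_lattice" "C \<in> point_group"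
        using x_in by (cases x) (auto simp: Mcm_eq)
      have n: "(n, mat 1) \<in> Mcm" using x by (simp add: Mcm_eq)
      show ?thesis
      proof (cases "C = mat 1")
        case True
        then show ?thesis using auto_Mcm_translation[OF h n] x by simp
      next
        case False
        then have "x = aff_mult (n, mat 1) (0, matA)"
          using x by (simp add: point_group_def matrix_mul_lid)
        then show ?thesis
          using hom(1)[OF n A] auto_Mcm_translation[OF h n] hA
          by (cases "h (n, mat 1)", cases "h (0, matA)") (simp add: matrix_mul_lid)
      qed
    qed
    moreover obtain x where "x \<in> Mcm" "h x = (0, matA)"
      using hom(3) A by (metis imageE)
    ultimately have "matA = mat 1" by (metis snd_conv)
    then show False by simp
  qed
  then show ?thesis using hom(2)[OF A] by (auto simp: Mcm_eq point_group_def)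
qed

lemma auto_Mcm_reflection:
  assumes h: "h \<in> auto (Mgrp Mcm)"
  obtains j where "j \<in> \<int>" "h (0, matA) = (antidiag j, matA)"
proof -
  note hom = auto_Mcm_hom[OF h]
  have A: "(0, matA) \<in> Mcm" by (simp add: Mcm_eq)
  obtain m where m: "h (0, matA) = (m, matA)" "m \<in> int_lattice"
    using hom(2)[OF A] auto_Mcm_reflection_snd[OF h] by (cases "h (0, matA)") (auto simp: Mcm_eq)
  have "(0, mat 1) = aff_mult (h (0, matA)) (h (0, matA))"
    using hom(1)[OF A A] hom(4) by simp
  then have "m + matA *v m = 0" using m by simp
  then have "m = antidiag (m$1)" by (simp add: vec_eq_iff forall_2)
  moreover have "m$1 \<in> \<int>" using m(2) by (simp add: int_lattice_def)
  ultimately show ?thesis using that m(1) by simp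
qed

definition circulant :: "real^2 \<Rightarrow> real^2^2" where
  "circulant p = vector [vector [p$1, p$2], vector [p$2, p$1]]"

lemma circulant_mult_vec_nth [simp]:
  "(circulant p *v v)$1 = p$1 * v$1 + p$2 * v$2" "(circulant p *v v)$2 = p$2 * v$1 + p$1 * v$2"
  by (simp_all add: circulant_def matrix_vector_mult_def sum_2 vector_2)

lemma circulant_commute_matA: "circulant p ** matA = matA ** circulant p"
  by (simp add: circulant_def cart2_simps vector_2)

lemma circulant_eq: "circulant p = p$1 *\<^sub>R mat 1 + p$2 *\<^sub>R matA"
  by (simp add: circulant_def vec_eq_iff forall_2 vector_2 mat_def)

lemma circulant_klein4:
  assumes p: "p \<in> int_lattice" and n: "n \<in> int_lattice" and e1: "circulant p *v n = axis 1 1"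
  shows "circulant p \<in> klein4"
proof -
  have eqs: "p$1 * n$1 + p$2 * n$2 = 1" "p$2 * n$1 + p$1 * n$2 = 0"
    using arg_cong[OF e1, of "\<lambda>v. v$1"] arg_cong[OF e1, of "\<lambda>v. v$2"] by (simp_all add: axis_def)
  have "(p$1 + p$2) * (n$1 + n$2) = 1" "(p$1 - p$2) * (n$1 - n$2) = 1"
    using eqs by (simp_all add: algebra_simps)
  moreover have "p$1 + p$2 \<in> \<int>" "n$1 + n$2 \<in> \<int>" "p$1 - p$2 \<in> \<int>" "n$1 - n$2 \<in> \<int>"
    using p n by (simp_all add: int_lattice_def)
  ultimately have "p$1 + p$2 = 1 \<or> p$1 + p$2 = -1" "p$1 - p$2 = 1 \<or> p$1 - p$2 = -1"
    using Ints_mult_eq_1 by blast+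
  moreover have "circulant p = (((p$1 + p$2) + (p$1 - p$2)) / 2) *\<^sub>R mat 1
      + (((p$1 + p$2) - (p$1 - p$2)) / 2) *\<^sub>R matA"
    by (simp add: circulant_eq)
  ultimately show ?thesis
    by (elim disjE) (simp_all only:, simp_all)
qed

lemma auto_Mcm_axis_2:
  assumes h: "h \<in> auto (Mgrp Mcm)"
    and j: "h (0, matA) = (antidiag j, matA)" and p: "h (axis 1 1, mat 1) = (p, mat 1)"
  shows "h (axis 2 1, mat 1) = (matA *v p, mat 1)"
proof -
  note hom = auto_Mcm_hom[OF h]
  have gens: "(axis 1 1, mat 1) \<in> Mcm" "(0, matA) \<in> Mcm" by (simp_all add: Mcm_eq)
  have "(axis 2 1, mat 1) = aff_mult (aff_mult (0, matA) (axis 1 1, mat 1)) (0, matA)"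
    by (simp add: matrix_mul_rid vec_eq_iff forall_2 axis_def)
  then have "h (axis 2 1, mat 1) = h (aff_mult (aff_mult (0, matA) (axis 1 1, mat 1)) (0, matA))"
    by (rule arg_cong)
  also have "\<dots> = aff_mult (h (aff_mult (0, matA) (axis 1 1, mat 1))) (h (0, matA))"
    using subgroup.m_closed[OF subgroup_Mcm gens(2,1)] gens(2) by (simp only: hom(1) AffGroup_simps)
  also have "\<dots> = aff_mult (aff_mult (h (0, matA)) (h (axis 1 1, mat 1))) (h (0, matA))"
    by (simp only: hom(1)[OF gens(2,1)])
  finally show ?thesis using j p by (simp add: matrix_mul_rid matrix_vector_right_distrib)
qed

lemma auto_Mcm_eq_std_auto:
  assumes h: "h \<in> auto (Mgrp Mcm)"
    and j: "h (0, matA) = (antidiag j, matA)" and p: "h (axis 1 1, mat 1) = (p, mat 1)"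
  shows "h = std_auto (circulant p) j"
proof
  fix x
  let ?gens = "{(axis 1 1, mat 1), (axis 2 1, mat 1), (0, matA)}"
  show "h x = std_auto (circulant p) j x"
  proof (cases "x \<in> Mcm")
    case True
    have "circulant p *v axis 1 1 = p" "circulant p *v axis 2 1 = matA *v p"
      by (simp_all add: vec_eq_iff forall_2 axis_def)
    then have agree: "h s = std_auto (circulant p) j s" if "s \<in> ?gens" for s
      using that j p auto_Mcm_axis_2[OF h j p] by (auto simp: std_auto_def Mcm_eq)
    have "?gens \<subseteq> carrier (Mgrp Mcm)" by (simp add: Mcm_eq)
    moreover have "x \<in> generate (Mgrp Mcm) ?gens" using True Mcm_generate by simp
    ultimately show ?thesis
      using hom_eq_on_generate[OF Mgrp_group[OF subgroup_Mcm] group_AffGroup auto_Mcm_hom(5)[OF h]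
          std_auto_hom[OF circulant_commute_matA] _ agree] by blast
  next
    case False
    have "h \<in> extensional Mcm" using h by (simp add: auto_def Bij_def)
    then show ?thesis using extensional_arb[OF _ False] False by (simp add: std_auto_def)
  qed
qed

lemma auto_Mcm_std_auto:
  assumes h: "h \<in> auto (Mgrp Mcm)"
  obtains B j where "B \<in> klein4" "j \<in> \<int>" "h = std_auto B j"
proof -
  note hom = auto_Mcm_hom[OF h]
  have e1: "(axis 1 1, mat 1) \<in> Mcm" by (simp add: Mcm_eq)
  obtain j where j: "j \<in> \<int>" "h (0, matA) = (antidiag j, matA)" using auto_Mcm_reflection[OF h] .
  obtain p where p: "h (axis 1 1, mat 1) = (p, mat 1)" "p \<in> int_lattice"
    using hom(2)[OF e1] auto_Mcm_translation[OF h e1] by (cases "h (axis 1 1, mat 1)") (auto simp: Mcm_eq)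
  note h_std = auto_Mcm_eq_std_auto[OF h j(2) p(1)]
  have "(axis 1 1, mat 1) \<in> h ` Mcm" using hom(3) e1 by simp
  then obtain x where x: "x \<in> Mcm" "h x = (axis 1 1, mat 1)" by auto
  then obtain n where "x = (n, mat 1)" "n \<in> int_lattice"
    by (cases x) (auto simp: h_std std_auto_def Mcm_eq)
  then have "circulant p \<in> klein4"
    using x p circulant_klein4 by (simp add: h_std std_auto_def)
  then show ?thesis using that j h_std by blast
qed

lemma NA_Mcm_eq: "NA Mcm = lattice_plus_diag \<times> klein4"
proof
  show "NA Mcm \<subseteq> lattice_plus_diag \<times> klein4"
  proof clarify
    fix a B assume g: "(a, B) \<in> NA Mcm"
    obtain C j where C: "C \<in> klein4" "j \<in> \<int>" and std: "conj_aut Mcm (a, B) = std_auto C j"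
      using auto_Mcm_std_auto[OF conj_aut_auto[OF subgroup_Mcm g]] .
    have linear_parts_agree: "B *v n = C *v n" if "n \<in> int_lattice" for n
    proof -
      have "(n, mat 1) \<in> Mcm" using that by (simp add: Mcm_eq)
      then show ?thesis
        using fun_cong[OF std, of "(n, mat 1)"] NA_invertible[OF g]
        by (simp add: conj_aut_def std_auto_def conj_aff_translation)
    qed
    have "B = C" by (rule matrix_eq_on_axes) (simp_all add: linear_parts_agree)
    with C have B: "B \<in> klein4" by simp
    have "(0, matA) \<in> Mcm" by (simp add: Mcm_eq)
    then have "a - matA *v a = antidiag j"
      using fun_cong[OF std, of "(0, matA)"] by (simp add: conj_aut_def std_auto_def conj_aff_klein4[OF B])
    then have "(a - matA *v a)$1 = j" by simp
    then have "a$1 - a$2 = j" by simp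
    then show "a \<in> lattice_plus_diag \<and> B \<in> klein4" using C(2) B by (simp add: lattice_plus_diag_def)
  qed
  show "lattice_plus_diag \<times> klein4 \<subseteq> NA Mcm" by (rule NA_Mcm_supset)
qed

lemma NA_Mcm_mult: "g \<in> NA Mcm \<Longrightarrow> h \<in> NA Mcm \<Longrightarrow> aff_mult g h \<in> NA Mcm"
  using subgroup.m_closed[OF subgroup_NA[OF subgroup_Mcm], of g h] by simp

lemma auto_Mcm_eq: "auto (Mgrp Mcm) = conj_aut Mcm ` NA Mcm"
proof
  show "conj_aut Mcm ` NA Mcm \<subseteq> auto (Mgrp Mcm)" using conj_aut_auto[OF subgroup_Mcm] by blast
  show "auto (Mgrp Mcm) \<subseteq> conj_aut Mcm ` NA Mcm"
  proof
    fix h assume "h \<in> auto (Mgrp Mcm)"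
    then obtain B j where Bj: "B \<in> klein4" "j \<in> \<int>" "h = std_auto B j" by (rule auto_Mcm_std_auto)
    then have "(vector [j, 0], B) \<in> lattice_plus_diag \<times> klein4"
      by (simp add: lattice_plus_diag_def vector_2)
    then have "h = conj_aut Mcm (vector [j, 0], B)" "(vector [j, 0], B) \<in> NA Mcm"
      using conj_aut_Mcm Bj by (simp_all add: NA_Mcm_eq vector_2)
    then show "h \<in> conj_aut Mcm ` NA Mcm" by (rule image_eqI)
  qed
qed

lemma conj_aut_in_Inn_iff:
  assumes g: "g \<in> NA Mcm"
  shows "conj_aut Mcm g \<in> Inn Mcm \<longleftrightarrow> snd g \<in> point_group"
proof -
  obtain a B where aB: "g = (a, B)" "a \<in> lattice_plus_diag" "B \<in> klein4"
    using g by (auto simp: NA_Mcm_eq)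
  show ?thesis
  proof
    assume "conj_aut Mcm g \<in> Inn Mcm"
    then obtain n C where m: "(n, C) \<in> Mcm" "conj_aut Mcm (a, B) = conj_aut Mcm (n, C)"
      by (auto simp: Inn_def aB)
    have C: "C \<in> point_group" "invertible C"
      using m(1) point_group_subset_klein4 klein4_invertible by (auto simp: Mcm_eq)
    have "B *v v = C *v v" if "v \<in> int_lattice" for v
    proof -
      have "(v, mat 1) \<in> Mcm" using that by (simp add: Mcm_eq)
      then show ?thesis
        using fun_cong[OF m(2), of "(v, mat 1)"] klein4_invertible[OF aB(3)] C(2)
        by (simp add: conj_aut_def conj_aff_translation)
    qed
    then have "B = C" by (intro matrix_eq_on_axes) simp_all
    then show "snd g \<in> point_group" using C aB by simp
  next
    assume "snd g \<in> point_group"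
    then have B: "B \<in> point_group" using aB by simp
    have m: "(vector [a$1 - a$2, 0], B) \<in> Mcm"
      using aB B by (simp add: Mcm_eq int_lattice_def lattice_plus_diag_def vector_2)
    have "(vector [a$1 - a$2, 0], B) \<in> lattice_plus_diag \<times> klein4"
      using m int_lattice_subset_plus_diag point_group_subset_klein4 by (auto simp: Mcm_eq)
    then have "conj_aut Mcm g = conj_aut Mcm (vector [a$1 - a$2, 0], B)"
      using aB by (simp add: conj_aut_Mcm vector_2)
    then show "conj_aut Mcm g \<in> Inn Mcm" using m by (simp add: Inn_def)
  qed
qed

section \<open>Distances on the orbifold\<close>

definition dist_Ints :: "real \<Rightarrow> real" where
  "dist_Ints x = \<bar>x - of_int (round x)\<bar>"

lemma dist_Ints_le: "k \<in> \<int> \<Longrightarrow> dist_Ints x \<le> \<bar>x - k\<bar>"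
  by (auto simp: dist_Ints_def round_diff_minimal elim!: Ints_cases)

lemma dist_Ints_le_half: "dist_Ints x \<le> 1/2"
  using of_int_round_abs_le[of x] by (simp add: dist_Ints_def abs_minus_commute)

lemma dist_Ints_nonneg: "0 \<le> dist_Ints x"
  by (simp add: dist_Ints_def)

lemma dist_Ints_add_Ints: "k \<in> \<int> \<Longrightarrow> dist_Ints (x + k) = dist_Ints x"
proof (rule antisym)
  assume k: "k \<in> \<int>"
  show "dist_Ints (x + k) \<le> dist_Ints x"
    using dist_Ints_le[of "of_int (round x) + k" "x + k"] k by (simp add: dist_Ints_def)
  show "dist_Ints x \<le> dist_Ints (x + k)"
    using dist_Ints_le[of "of_int (round (x + k)) - k" x] k by (simp add: dist_Ints_def algebra_simps)
qed

lemma dist_Ints_eq_0_iff: "dist_Ints x = 0 \<longleftrightarrow> x \<in> \<int>"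
proof
  assume "dist_Ints x = 0"
  then have "x = of_int (round x)" by (simp add: dist_Ints_def)
  then show "x \<in> \<int>" by (metis Ints_of_int)
qed (use dist_Ints_le[of x x] dist_Ints_nonneg[of x] in simp)

lemma dist_Ints_half: "dist_Ints (1/2) = 1/2"
proof -
  have "1/2 \<le> \<bar>1/2 - of_int n :: real\<bar>" for n :: int
    by (cases "n \<le> 0") (simp_all add: abs_if)
  then show ?thesis using dist_Ints_le_half[of "1/2"] by (simp add: dist_Ints_def antisym)
qed

lemma cos_2pi_add_Ints: "k \<in> \<int> \<Longrightarrow> cos (2 * pi * (x + k)) = cos (2 * pi * x)"
  by (simp add: distrib_left cos_add cos_integer_2pi sin_integer_2pi)

lemma sin_2pi_add_Ints: "k \<in> \<int> \<Longrightarrow> sin (2 * pi * (x + k)) = sin (2 * pi * x)"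
  by (simp add: distrib_left sin_add cos_integer_2pi sin_integer_2pi)

lemma cos_dist_Ints: "cos (2 * pi * dist_Ints x) = cos (2 * pi * x)"
proof -
  have "cos (2 * pi * dist_Ints x) = cos (2 * pi * (x + - of_int (round x)))"
    using cos_abs_real[of "2 * pi * (x - of_int (round x))"]
    by (simp add: dist_Ints_def abs_mult)
  also have "\<dots> = cos (2 * pi * x)" by (rule cos_2pi_add_Ints) simp
  finally show ?thesis .
qed

lemma Sym_Mcm_eq_Aff: "Sym Mcm = Aff Mcm"
  using star_isometry[OF subgroup_Mcm] klein4_orthogonal
  by (auto simp: Sym_def Aff_def NA_Mcm_eq)

lemma Sym_Mcm_eq: "Sym Mcm = star Mcm ` NA Mcm"
  by (simp add: Sym_Mcm_eq_Aff Aff_def)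

lemma orbit_of_Mcm_first_coord:
  assumes "p \<in> orbit_of Mcm y" "y \<in> lattice_plus_diag"
  shows "p$1 - y$1 \<in> \<int>"
proof -
  obtain n C where m: "n \<in> int_lattice" "C \<in> point_group" "p = n + C *v y"
    using assms(1) by (auto simp: orbit_of_def Mcm_eq)
  have "(C *v y)$1 - y$1 \<in> \<int>"
    using m(2) assms(2) by (auto simp: point_group_def lattice_plus_diag_def matrix_vector_mul_lid
        Ints_diff_commute)
  moreover have "n$1 \<in> \<int>" using m(1) by (simp add: int_lattice_def)
  ultimately have "n$1 + ((C *v y)$1 - y$1) \<in> \<int>" by simp
  moreover have "p$1 - y$1 = n$1 + ((C *v y)$1 - y$1)" using m(3) by simp
  ultimately show ?thesis by metis
qed

lemma orb_dist_Mcm_lower: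
  assumes "y \<in> lattice_plus_diag" "z \<in> lattice_plus_diag"
  shows "dist_Ints (y$1 - z$1) \<le> orb_dist (orbit_of Mcm y) (orbit_of Mcm z)"
proof (rule orb_dist_ge[OF orbit_of_self[OF subgroup_Mcm] orbit_of_self[OF subgroup_Mcm]])
  fix p q assume "p \<in> orbit_of Mcm y" "q \<in> orbit_of Mcm z"
  then have k: "(p$1 - y$1) - (q$1 - z$1) \<in> \<int>"
    using orbit_of_Mcm_first_coord assms by (blast intro: Ints_diff)
  have "dist_Ints (y$1 - z$1) = dist_Ints (p$1 - q$1)"
    using dist_Ints_add_Ints[OF k, of "y$1 - z$1"] by simp
  also have "\<dots> \<le> \<bar>(p - q)$1\<bar>" using dist_Ints_le[of 0] by simp
  also have "\<dots> \<le> dist p q" unfolding dist_norm by (rule component_le_norm_cart)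
  finally show "dist_Ints (y$1 - z$1) \<le> dist p q" .
qed

lemma orb_dist_Mcm_le_2: "orb_dist (orbit_of Mcm y) (orbit_of Mcm z) \<le> 2"
proof -
  have reduce: "x - vector [of_int \<lfloor>x$1\<rfloor>, of_int \<lfloor>x$2\<rfloor>] \<in> orbit_of Mcm x" for x :: "real^2"
  proof -
    have "(- vector [of_int \<lfloor>x$1\<rfloor>, of_int \<lfloor>x$2\<rfloor>], mat 1) \<in> Mcm"
      by (simp add: Mcm_eq int_lattice_def vector_2)
    then show ?thesis by (force simp: orbit_of_def matrix_vector_mul_lid)
  qed
  let ?p = "y - vector [of_int \<lfloor>y$1\<rfloor>, of_int \<lfloor>y$2\<rfloor>] :: real^2"
  let ?q = "z - vector [of_int \<lfloor>z$1\<rfloor>, of_int \<lfloor>z$2\<rfloor>] :: real^2"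
  have "dist ?p ?q \<le> \<bar>(?p - ?q)$1\<bar> + \<bar>(?p - ?q)$2\<bar>"
    using norm_le_l1_cart[of "?p - ?q"] by (simp add: dist_norm sum_2 del: vector_minus_component)
  also have "\<dots> \<le> 2" by (simp add: vector_2) linarith
  finally show ?thesis using orb_dist_le[OF reduce reduce] by (meson order_trans)
qed

text \<open>On \<open>lattice_plus_diag\<close> the first coordinate of a point is determined by its orbit up to \<open>\<int>\<close>.
  Evaluating at the diagonal points \<open>(t, t)\<close>, which \<open>(a, B)\<close> moves to first coordinate
  \<open>a\<^sub>1 \<plusminus> t\<close>, detects both the orientation and \<open>a\<^sub>1\<close> modulo \<open>\<int>\<close>.\<close>

lemma orb_dist_star_lower:
  assumes g: "(a, B) \<in> NA Mcm" and h: "(b, C) \<in> NA Mcm"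
  shows "dist_Ints (a$1 - b$1 + (diag_sign B - diag_sign C) * t)
    \<le> orb_dist (star Mcm (a, B) (orbit_of Mcm (vector [t, t]))) (star Mcm (b, C) (orbit_of Mcm (vector [t, t])))"
proof -
  have diag: "a + B *v vector [t, t] \<in> lattice_plus_diag" "(a + B *v vector [t, t])$1 = a$1 + diag_sign B * t"
    if "(a, B) \<in> NA Mcm" for a B
    using that by (auto simp: NA_Mcm_eq klein4_mult_diag lattice_plus_diag_def vector_2)
  show ?thesis
    using orb_dist_Mcm_lower[OF diag(1)[OF g] diag(1)[OF h]]
    by (simp only: star_orbit[OF subgroup_Mcm] g h aff_apply_pair diag(2)[OF g] diag(2)[OF h])
      (simp add: algebra_simps)
qed

lemma diag_sign_distinct:
  assumes "\<not> (B \<in> point_group \<longleftrightarrow> C \<in> point_group)"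
  obtains t where "x + (diag_sign B - diag_sign C) * t = 1/2"
proof
  have "diag_sign B - diag_sign C \<noteq> 0" using assms by (auto simp: diag_sign_def)
  then show "x + (diag_sign B - diag_sign C) * ((1/2 - x) / (diag_sign B - diag_sign C)) = 1/2"
    by simp
qed

lemma NA_Mcm_same_class:
  assumes g: "(a, B) \<in> NA Mcm" and h: "(b, C) \<in> NA Mcm"
    and same: "B \<in> point_group \<longleftrightarrow> C \<in> point_group" "a$1 - b$1 \<in> \<int>"
  shows "\<exists>m\<in>Mcm. aff_mult (a, B) m = (b, C)"
proof
  have BC: "B \<in> klein4" "C \<in> klein4" "a \<in> lattice_plus_diag" "b \<in> lattice_plus_diag"
    using g h by (auto simp: NA_Mcm_eq)
  have "b - a \<in> int_lattice"
  proof -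
    have "b$2 - b$1 \<in> \<int>" "b$1 - a$1 \<in> \<int>" "a$1 - a$2 \<in> \<int>"
      using BC(3,4) same by (simp_all add: lattice_plus_diag_def Ints_diff_commute)
    then have "(b$2 - b$1) + (b$1 - a$1) + (a$1 - a$2) \<in> \<int>" by (intro Ints_add)
    then show ?thesis using \<open>b$1 - a$1 \<in> \<int>\<close> by (simp add: int_lattice_def)
  qed
  then show "(B *v (b - a), B ** C) \<in> Mcm"
    using BC same klein4_mult_point_group_iff[of B C] by (simp add: Mcm_eq int_lattice_klein4)
  have "B ** (B ** C) = C" by (metis klein4_involution[OF BC(1)] matrix_mul_assoc matrix_mul_lid)
  then show "aff_mult (a, B) (B *v (b - a), B ** C) = (b, C)"
    using klein4_involution[OF BC(1)] by (simp add: matrix_vector_mul_assoc matrix_vector_mul_lid)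
qed

lemma star_Mcm_eq_iff:
  assumes g: "(a, B) \<in> NA Mcm" and h: "(b, C) \<in> NA Mcm"
  shows "star Mcm (a, B) = star Mcm (b, C)
    \<longleftrightarrow> (B \<in> point_group \<longleftrightarrow> C \<in> point_group) \<and> a$1 - b$1 \<in> \<int>"
proof
  assume eq: "star Mcm (a, B) = star Mcm (b, C)"
  have zero: "dist_Ints (a$1 - b$1 + (diag_sign B - diag_sign C) * t) = 0" for t
  proof -
    have "orb_dist (star Mcm (b, C) (orbit_of Mcm (vector [t, t]))) (star Mcm (b, C) (orbit_of Mcm (vector [t, t]))) = 0"
      using orb_dist_self[OF orbit_of_self[OF subgroup_Mcm]] by (simp add: star_orbit[OF subgroup_Mcm] h)
    then show ?thesis
      using orb_dist_star_lower[OF g h, of t] dist_Ints_nonneg eq by (simp add: antisym)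
  qed
  show "(B \<in> point_group \<longleftrightarrow> C \<in> point_group) \<and> a$1 - b$1 \<in> \<int>"
  proof
    show "B \<in> point_group \<longleftrightarrow> C \<in> point_group"
    proof (rule ccontr)
      assume "\<not> (B \<in> point_group \<longleftrightarrow> C \<in> point_group)"
      then obtain t where "a$1 - b$1 + (diag_sign B - diag_sign C) * t = 1/2"
        using diag_sign_distinct by blast
      then have "dist_Ints (1/2) = 0" using zero[of t] by (simp only:)
      then show False using dist_Ints_half by simp
    qed
    show "a$1 - b$1 \<in> \<int>" using zero[of 0] by (simp add: dist_Ints_eq_0_iff)
  qed
next
  assume "(B \<in> point_group \<longleftrightarrow> C \<in> point_group) \<and> a$1 - b$1 \<in> \<int>"
  then obtain m where "m \<in> Mcm" "aff_mult (a, B) m = (b, C)"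
    using NA_Mcm_same_class[OF g h] by blast
  then show "star Mcm (a, B) = star Mcm (b, C)"
    using star_mult_mem[OF subgroup_Mcm g] by metis
qed

lemma sym_dist_Mcm_ge:
  assumes "g \<in> NA Mcm" "h \<in> NA Mcm" "X \<in> Orb Mcm"
  shows "orb_dist (star Mcm g X) (star Mcm h X) \<le> sym_dist Mcm (star Mcm g) (star Mcm h)"
  unfolding sym_dist_def
proof (rule cSup_upper)
  show "orb_dist (star Mcm g X) (star Mcm h X) \<in> (\<lambda>X. orb_dist (star Mcm g X) (star Mcm h X)) ` Orb Mcm"
    using assms(3) by blast
  have "orb_dist (star Mcm g Y) (star Mcm h Y) \<le> 2" if "Y \<in> Orb Mcm" for Y
    using that assms(1,2) by (auto elim!: Orb_cases simp: star_orbit[OF subgroup_Mcm] orb_dist_Mcm_le_2)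
  then show "bdd_above ((\<lambda>X. orb_dist (star Mcm g X) (star Mcm h X)) ` Orb Mcm)"
    by (auto intro: bdd_aboveI[of _ 2])
qed

lemma sym_dist_star_lower:
  assumes "(a, B) \<in> NA Mcm" "(b, C) \<in> NA Mcm"
  shows "dist_Ints (a$1 - b$1 + (diag_sign B - diag_sign C) * t) \<le> sym_dist Mcm (star Mcm (a, B)) (star Mcm (b, C))"
  using orb_dist_star_lower[OF assms] sym_dist_Mcm_ge[OF assms orbit_of_in_Orb] by (rule order_trans)

lemma sym_dist_star_opposite:
  assumes g: "(a, B) \<in> NA Mcm" and h: "(b, C) \<in> NA Mcm"
    and BC: "\<not> (B \<in> point_group \<longleftrightarrow> C \<in> point_group)"
  shows "1/2 \<le> sym_dist Mcm (star Mcm (a, B)) (star Mcm (b, C))"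
proof -
  obtain t where t: "a$1 - b$1 + (diag_sign B - diag_sign C) * t = 1/2"
    using diag_sign_distinct[OF BC] by blast
  show ?thesis using sym_dist_star_lower[OF g h, of t] unfolding t dist_Ints_half .
qed

lemma sym_dist_star_upper:
  assumes g: "(a, B) \<in> NA Mcm" and h: "(b, C) \<in> NA Mcm" and BC: "B \<in> point_group \<longleftrightarrow> C \<in> point_group"
  shows "sym_dist Mcm (star Mcm (a, B)) (star Mcm (b, C)) \<le> 2 * dist_Ints (a$1 - b$1)"
proof -
  define w where "w = a$1 - b$1 - of_int (round (a$1 - b$1))"
  define g' where "g' = (a - vector [w, w], B)"
  have g': "g' \<in> NA Mcm" using g by (simp add: g'_def NA_Mcm_eq lattice_plus_diag_def vector_2)
  have "star Mcm g' = star Mcm (b, C)"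
    using g' h BC by (simp add: g'_def star_Mcm_eq_iff w_def vector_2)
  then have "sym_dist Mcm (star Mcm (a, B)) (star Mcm (b, C)) = sym_dist Mcm (star Mcm (a, B)) (star Mcm g')"
    by simp
  also have "\<dots> \<le> 2 * \<bar>w\<bar>"
  proof (rule sym_dist_le)
    fix X assume "X \<in> Orb Mcm"
    then obtain x where X: "X = orbit_of Mcm x" by (rule Orb_cases)
    have "orb_dist (star Mcm (a, B) X) (star Mcm g' X) \<le> dist (aff_apply (a, B) x) (aff_apply g' x)"
      unfolding X star_orbit[OF subgroup_Mcm g] star_orbit[OF subgroup_Mcm g']
      by (rule orb_dist_le[OF orbit_of_self[OF subgroup_Mcm] orbit_of_self[OF subgroup_Mcm]])
    also have "\<dots> = norm (vector [w, w] :: real^2)" by (simp add: g'_def dist_norm)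
    also have "\<dots> \<le> 2 * \<bar>w\<bar>"
      using norm_le_l1_cart[of "vector [w, w] :: real^2"] by (simp add: sum_2 vector_2)
    finally show "orb_dist (star Mcm (a, B) X) (star Mcm g' X) \<le> 2 * \<bar>w\<bar>" .
  qed
  finally show ?thesis by (simp add: w_def dist_Ints_def)
qed

section \<open>The isomorphism with O(2)\<close>

definition rot_refl :: "bool \<Rightarrow> real \<Rightarrow> real^2^2" where
  "rot_refl p s =
    (if p then vector [vector [cos (2 * pi * s), - sin (2 * pi * s)], vector [sin (2 * pi * s), cos (2 * pi * s)]]
     else vector [vector [cos (2 * pi * s), sin (2 * pi * s)], vector [sin (2 * pi * s), - cos (2 * pi * s)]])"

lemma rot_refl_nth [simp]:
  "rot_refl p s $ 1 $ 1 = cos (2 * pi * s)" "rot_refl p s $ 2 $ 1 = sin (2 * pi * s)"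
  "rot_refl p s $ 1 $ 2 = (if p then - sin (2 * pi * s) else sin (2 * pi * s))"
  "rot_refl p s $ 2 $ 2 = (if p then cos (2 * pi * s) else - cos (2 * pi * s))"
  by (simp_all add: rot_refl_def vector_2)

lemma rot_refl_add_Ints: "k \<in> \<int> \<Longrightarrow> rot_refl p (s + k) = rot_refl p s"
  by (simp add: matrix_2x2_eq_iff cos_2pi_add_Ints sin_2pi_add_Ints)

lemma rot_refl_mult: "rot_refl p s ** rot_refl q t = rot_refl (p = q) (s + (if p then t else - t))"
  by (cases p; cases q)
    (simp_all add: matrix_2x2_eq_iff matrix_2x2_mult_nth distrib_left cos_add sin_add cos_diff sin_diff
      algebra_simps)

lemma orthogonal_matrix_rot_refl: "orthogonal_matrix (rot_refl p s)"
  unfolding orthogonal_matrix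
  by (cases p) (simp_all add: matrix_2x2_eq_iff matrix_2x2_mult_nth transpose_def mat_def
      power2_eq_square[symmetric] algebra_simps)

lemma orthogonal_matrix_eq_rot_refl:
  assumes "orthogonal_matrix (Q::real^2^2)"
  obtains p s where "Q = rot_refl p s"
proof -
  have "transpose Q ** Q = mat 1" using assms by (simp add: orthogonal_matrix)
  then have col: "(Q$1$1)^2 + (Q$2$1)^2 = 1" "Q$1$1 * Q$1$2 + Q$2$1 * Q$2$2 = 0"
    by (simp_all add: matrix_2x2_eq_iff matrix_2x2_mult_nth transpose_def mat_def power2_eq_square)
  obtain \<theta> where \<theta>: "Q$1$1 = cos \<theta>" "Q$2$1 = sin \<theta>" using sincos_total_2pi[OF col(1)] by metis
  define d where "d = det Q"
  have d: "d = 1 \<or> d = -1" using det_orthogonal_matrix[OF assms] by (simp add: d_def)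
  have "Q$1$2 = - Q$2$1 * d" "Q$2$2 = Q$1$1 * d"
    using col unfolding d_def det_2 by algebra+
  then have "Q = rot_refl (d = 1) (\<theta> / (2 * pi))"
    using d \<theta> by (auto simp: matrix_2x2_eq_iff)
  then show ?thesis by (rule that)
qed

lemma norm_rot_refl_diff:
  "norm (rot_refl p s - rot_refl q t) = (if p = q then sqrt (4 - 4 * cos (2 * pi * (s - t))) else 2)"
proof -
  define x y where "x = 2 * pi * s" and "y = 2 * pi * t"
  have same: "(cos x - cos y)^2 + (sin x - sin y)^2 = 2 - 2 * cos (2 * pi * (s - t))"
  proof -
    have "cos (2 * pi * (s - t)) = cos x * cos y + sin x * sin y"
      by (simp add: x_def y_def right_diff_distrib cos_diff)
    then show ?thesis
      using sin_cos_squared_add[of x] sin_cos_squared_add[of y] unfolding power2_diff by linarith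
  qed
  have opposite: "(cos x)^2 + (sin x)^2 + ((cos y)^2 + (sin y)^2) = 2" by simp
  have "(norm (rot_refl p s - rot_refl q t))^2
      = (if p = q then 2 * ((cos x - cos y)^2 + (sin x - sin y)^2)
         else 2 * ((cos x)^2 + (sin x)^2 + ((cos y)^2 + (sin y)^2)))"
    unfolding power2_norm_matrix_2x2
    by (cases p; cases q) (simp_all add: x_def y_def power2_diff power2_sum algebra_simps,
      (use sin_cos_squared_add[of "pi * (s * 2)"] sin_cos_squared_add[of "pi * (t * 2)"] in linarith)+)
  then have "(norm (rot_refl p s - rot_refl q t))^2 = (if p = q then 4 - 4 * cos (2 * pi * (s - t)) else 4)"
    by (simp only: same opposite) simp
  then show ?thesis
    by (metis norm_ge_zero real_sqrt_unique real_sqrt_four)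
qed

lemma rot_refl_eq_iff: "rot_refl p s = rot_refl q t \<longleftrightarrow> p = q \<and> s - t \<in> \<int>"
proof
  assume "rot_refl p s = rot_refl q t"
  then have "norm (rot_refl p s - rot_refl q t) = 0" by simp
  then have "p = q" "cos (2 * pi * (s - t)) = 1" by (auto simp: norm_rot_refl_diff split: if_splits)
  then obtain n :: int where "2 * pi * (s - t) = of_int n * 2 * pi"
    using cos_one_2pi_int[THEN iffD1] by blast
  then have "s - t = n" by simp
  then show "p = q \<and> s - t \<in> \<int>" using \<open>p = q\<close> by simp
next
  assume "p = q \<and> s - t \<in> \<int>"
  then show "rot_refl p s = rot_refl q t" using rot_refl_add_Ints[of "s - t" q t] by simp
qed

lemma norm_rot_refl_le: "norm (rot_refl p s - rot_refl p t) \<le> 12 * dist_Ints (s - t)"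
proof -
  define v where "v = dist_Ints (s - t)"
  have "cos (2 * pi * (s - t)) = cos (2 * (pi * v))"
    using cos_dist_Ints[of "s - t"] by (simp add: v_def mult.assoc)
  then have "4 - 4 * cos (2 * pi * (s - t)) = 8 * (sin (pi * v))^2"
    using cos_double_sin[of "pi * v"] by simp
  also have "\<dots> \<le> 8 * (pi * v)^2"
    using abs_sin_x_le_abs_x[of "pi * v"] by (simp add: abs_le_square_iff)
  also have "\<dots> = 8 * (pi * pi) * v^2" by (simp add: power2_eq_square)
  also have "\<dots> \<le> 8 * (4 * 4) * v^2"
    using pi_less_4 pi_gt_zero by (intro mult_right_mono mult_left_mono mult_mono) auto
  also have "\<dots> \<le> (12 * v)^2" by (simp add: power2_eq_square)
  finally have "sqrt (4 - 4 * cos (2 * pi * (s - t))) \<le> sqrt ((12 * v)^2)"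
    by (rule real_sqrt_le_mono)
  also have "\<dots> = 12 * v" using dist_Ints_nonneg[of "s - t"] by (simp only: real_sqrt_abs v_def)
  finally show ?thesis by (simp only: norm_rot_refl_diff simp_thms if_True v_def)
qed

lemma dist_Ints_less_of_norm_rot_refl:
  assumes e: "0 \<le> e" "e \<le> 1/2"
    and less: "norm (rot_refl p s - rot_refl p t) < sqrt (4 - 4 * cos (2 * pi * e))"
  shows "dist_Ints (s - t) < e"
proof (rule ccontr)
  assume "\<not> dist_Ints (s - t) < e"
  then have "cos (2 * pi * dist_Ints (s - t)) \<le> cos (2 * pi * e)"
    using e dist_Ints_le_half[of "s - t"] by (intro cos_monotone_0_pi_le) simp_all
  then show False using less by (simp add: norm_rot_refl_diff cos_dist_Ints)
qed

definition o2_of :: "aff \<Rightarrow> real^2^2" where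
  "o2_of g = rot_refl (snd g \<in> point_group) (fst g $ 1)"

lemma klein4_mult_first_coord:
  "B \<in> klein4 \<Longrightarrow> b \<in> lattice_plus_diag \<Longrightarrow> (B *v b)$1 - diag_sign B * b$1 \<in> \<int>"
  unfolding klein4_def diag_sign_def lattice_plus_diag_def
  by (auto simp: matrix_vector_mul_lid Ints_diff_commute)

lemma o2_of_mult:
  assumes "g \<in> NA Mcm" "h \<in> NA Mcm"
  shows "o2_of (aff_mult g h) = o2_of g ** o2_of h"
proof -
  obtain a B b C where gh: "g = (a, B)" "h = (b, C)" by fastforce
  have BC: "B \<in> klein4" "C \<in> klein4" "b \<in> lattice_plus_diag" using assms by (auto simp: gh NA_Mcm_eq)
  have "(a + B *v b)$1 - (a$1 + (if B \<in> point_group then b$1 else - b$1)) \<in> \<int>"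
    using klein4_mult_first_coord[OF BC(1,3)] by (cases "B \<in> point_group") (simp_all add: diag_sign_def)
  then have "rot_refl ((B \<in> point_group) = (C \<in> point_group)) ((a + B *v b)$1)
      = rot_refl ((B \<in> point_group) = (C \<in> point_group)) (a$1 + (if B \<in> point_group then b$1 else - b$1))"
    by (simp add: rot_refl_eq_iff)
  then show ?thesis
    using klein4_mult_point_group_iff[OF BC(1,2)] by (simp add: gh o2_of_def rot_refl_mult)
qed

lemma star_eq_iff_o2_of:
  assumes "g \<in> NA Mcm" "h \<in> NA Mcm"
  shows "star Mcm g = star Mcm h \<longleftrightarrow> o2_of g = o2_of h"
  using assms star_Mcm_eq_iff[of "fst g" "snd g" "fst h" "snd h"] by (simp add: o2_of_def rot_refl_eq_iff)

text \<open>The choice is irrelevant: \<open>o2_of\<close> is constant on the fibres of \<open>star Mcm\<close>.\<close>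

definition sym_to_O2 :: "((real^2) set \<Rightarrow> (real^2) set) \<Rightarrow> real^2^2" where
  "sym_to_O2 \<phi> = o2_of (SOME g. g \<in> NA Mcm \<and> star Mcm g = \<phi>)"

lemma sym_to_O2_star: "g \<in> NA Mcm \<Longrightarrow> sym_to_O2 (star Mcm g) = o2_of g"
  unfolding sym_to_O2_def by (rule someI2[of _ g]) (auto simp: star_eq_iff_o2_of)

lemma sym_to_O2_iso: "sym_to_O2 \<in> iso (SymGrp Mcm) O2"
proof -
  have carrier: "carrier (SymGrp Mcm) = star Mcm ` NA Mcm" by (simp add: SymGrp_def Sym_Mcm_eq)
  have mult: "star Mcm g \<otimes>\<^bsub>SymGrp Mcm\<^esub> star Mcm h = star Mcm (aff_mult g h)"
    if "g \<in> NA Mcm" "h \<in> NA Mcm" for g h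
    using star_hom[OF subgroup_Mcm] that by (simp add: SymGrp_def hom_def)
  have hom: "sym_to_O2 \<in> hom (SymGrp Mcm) O2"
  proof (rule homI)
    fix \<phi> assume "\<phi> \<in> carrier (SymGrp Mcm)"
    then show "sym_to_O2 \<phi> \<in> carrier O2"
      using carrier by (auto simp: sym_to_O2_star o2_of_def O2_def orthogonal_matrix_rot_refl)
  next
    fix \<phi> \<psi> assume "\<phi> \<in> carrier (SymGrp Mcm)" "\<psi> \<in> carrier (SymGrp Mcm)"
    then obtain g h where "g \<in> NA Mcm" "h \<in> NA Mcm" "\<phi> = star Mcm g" "\<psi> = star Mcm h"
      using carrier by auto
    then show "sym_to_O2 (\<phi> \<otimes>\<^bsub>SymGrp Mcm\<^esub> \<psi>) = sym_to_O2 \<phi> \<otimes>\<^bsub>O2\<^esub> sym_to_O2 \<psi>"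
      by (simp add: mult sym_to_O2_star o2_of_mult NA_Mcm_mult O2_def)
  qed
  have "inj_on sym_to_O2 (carrier (SymGrp Mcm))"
    by (rule inj_onI) (auto simp: carrier sym_to_O2_star star_eq_iff_o2_of)
  moreover have "carrier O2 \<subseteq> sym_to_O2 ` carrier (SymGrp Mcm)"
  proof
    fix Q assume "Q \<in> carrier O2"
    then obtain p s where Q: "Q = rot_refl p s"
      using orthogonal_matrix_eq_rot_refl by (auto simp: O2_def)
    define g where "g = (vector [s, s] :: real^2, if p then mat 1 else - mat 1 :: real^2^2)"
    have "g \<in> NA Mcm" by (simp add: g_def NA_Mcm_eq lattice_plus_diag_def vector_2)
    moreover have "o2_of g = Q" by (simp add: g_def o2_of_def Q vector_2)
    ultimately have "Q = sym_to_O2 (star Mcm g)" "star Mcm g \<in> carrier (SymGrp Mcm)"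
      by (simp_all add: sym_to_O2_star carrier)
    then show "Q \<in> sym_to_O2 ` carrier (SymGrp Mcm)" by (rule image_eqI)
  qed
  moreover have "sym_to_O2 ` carrier (SymGrp Mcm) \<subseteq> carrier O2"
    using hom by (auto simp: hom_def)
  ultimately show ?thesis
    using hom by (auto simp: iso_def bij_betw_def)
qed

lemma sym_to_O2_continuous:
  assumes "\<phi> \<in> Sym Mcm" "0 < e"
  shows "\<exists>d>0. \<forall>\<psi>\<in>Sym Mcm. sym_dist Mcm \<phi> \<psi> < d \<longrightarrow> norm (sym_to_O2 \<phi> - sym_to_O2 \<psi>) < e"
proof (intro exI[of _ "min (1/2) (e/12)"] conjI ballI impI)
  obtain a B where g: "(a, B) \<in> NA Mcm" "\<phi> = star Mcm (a, B)"
    using assms(1) by (auto simp: Sym_Mcm_eq)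
  fix \<psi> assume "\<psi> \<in> Sym Mcm" and close: "sym_dist Mcm \<phi> \<psi> < min (1/2) (e/12)"
  then obtain b C where h: "(b, C) \<in> NA Mcm" "\<psi> = star Mcm (b, C)" by (auto simp: Sym_Mcm_eq)
  have same: "B \<in> point_group \<longleftrightarrow> C \<in> point_group"
    using sym_dist_star_opposite[OF g(1) h(1)] close g h by force
  have "norm (sym_to_O2 \<phi> - sym_to_O2 \<psi>) \<le> 12 * dist_Ints (a$1 - b$1)"
    using norm_rot_refl_le same by (simp add: g h sym_to_O2_star o2_of_def)
  also have "\<dots> \<le> 12 * sym_dist Mcm \<phi> \<psi>"
    using sym_dist_star_lower[OF g(1) h(1), of 0] by (simp add: g h)
  also have "\<dots> < e" using close by simp
  finally show "norm (sym_to_O2 \<phi> - sym_to_O2 \<psi>) < e" .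
qed (use assms(2) in simp)

lemma sym_to_O2_inverse_continuous:
  assumes "\<phi> \<in> Sym Mcm" "0 < e"
  shows "\<exists>d>0. \<forall>\<psi>\<in>Sym Mcm. norm (sym_to_O2 \<phi> - sym_to_O2 \<psi>) < d \<longrightarrow> sym_dist Mcm \<phi> \<psi> < e"
proof -
  obtain a B where g: "(a, B) \<in> NA Mcm" "\<phi> = star Mcm (a, B)"
    using assms(1) by (auto simp: Sym_Mcm_eq)
  define e' where "e' = min (e/4) (1/4)"
  have e': "0 < e'" "e' \<le> 1/2" using assms(2) by (auto simp: e'_def)
  have "cos (2 * pi * e') < 1"
    using cos_monotone_0_pi[of 0 "2 * pi * e'"] e' by simp
  then have pos: "0 < min 2 (sqrt (4 - 4 * cos (2 * pi * e')))" by simp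
  show ?thesis
  proof (intro exI[of _ "min 2 (sqrt (4 - 4 * cos (2 * pi * e')))"] conjI ballI impI pos)
    fix \<psi> assume "\<psi> \<in> Sym Mcm"
      and close: "norm (sym_to_O2 \<phi> - sym_to_O2 \<psi>) < min 2 (sqrt (4 - 4 * cos (2 * pi * e')))"
    then obtain b C where h: "(b, C) \<in> NA Mcm" "\<psi> = star Mcm (b, C)" by (auto simp: Sym_Mcm_eq)
    have same: "B \<in> point_group \<longleftrightarrow> C \<in> point_group"
      using close by (auto simp: g h sym_to_O2_star o2_of_def norm_rot_refl_diff split: if_splits)
    then have "dist_Ints (a$1 - b$1) < e'"
      using close e' by (intro dist_Ints_less_of_norm_rot_refl[where p = "C \<in> point_group"])
        (simp_all add: g h sym_to_O2_star o2_of_def)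
    then have "2 * dist_Ints (a$1 - b$1) < e" using dist_Ints_nonneg[of "a$1 - b$1"] by (simp add: e'_def)
    then show "sym_dist Mcm \<phi> \<psi> < e"
      using sym_dist_star_upper[OF g(1) h(1) same] by (simp add: g h)
  qed
qed

lemma sym_to_O2_homeo: "homeo_Sym_O2 Mcm sym_to_O2"
  unfolding homeo_Sym_O2_def using sym_to_O2_continuous sym_to_O2_inverse_continuous by blast

section \<open>The outer automorphism group\<close>

lemma Inn_coset_eq_iff:
  assumes g: "g \<in> NA Mcm" and h: "h \<in> NA Mcm"
  shows "Inn Mcm #>\<^bsub>AutoGroup (Mgrp Mcm)\<^esub> conj_aut Mcm g = Inn Mcm #>\<^bsub>AutoGroup (Mgrp Mcm)\<^esub> conj_aut Mcm h
    \<longleftrightarrow> (snd g \<in> point_group \<longleftrightarrow> snd h \<in> point_group)"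
proof -
  interpret Aut: group "AutoGroup (Mgrp Mcm)" by (rule group.AutoGroup[OF Mgrp_group[OF subgroup_Mcm]])
  interpret N: subgroup "NA Mcm" AffGroup by (rule subgroup_NA[OF subgroup_Mcm])
  interpret c: group_hom "AffGroup\<lparr>carrier := NA Mcm\<rparr>" "AutoGroup (Mgrp Mcm)" "conj_aut Mcm"
    by (rule conj_aut_group_hom[OF subgroup_Mcm])
  have inv_eq: "inv\<^bsub>AffGroup\<lparr>carrier := NA Mcm\<rparr>\<^esub> h = inv\<^bsub>AffGroup\<^esub> h"
    using group.m_inv_consistent[OF group_AffGroup N.subgroup_axioms h] .
  have gh: "g \<otimes>\<^bsub>AffGroup\<^esub> inv\<^bsub>AffGroup\<^esub> h \<in> NA Mcm" using g h by (simp del: AffGroup_simps)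
  have "conj_aut Mcm g \<otimes>\<^bsub>AutoGroup (Mgrp Mcm)\<^esub> inv\<^bsub>AutoGroup (Mgrp Mcm)\<^esub> conj_aut Mcm h
      = conj_aut Mcm (g \<otimes>\<^bsub>AffGroup\<^esub> inv\<^bsub>AffGroup\<^esub> h)"
    using g h c.hom_mult[of g "inv\<^bsub>AffGroup\<lparr>carrier := NA Mcm\<rparr>\<^esub> h"] c.hom_inv[of h]
    by (simp add: inv_eq del: AffGroup_simps)
  moreover have "snd (g \<otimes>\<^bsub>AffGroup\<^esub> inv\<^bsub>AffGroup\<^esub> h) \<in> point_group
      \<longleftrightarrow> (snd g \<in> point_group \<longleftrightarrow> snd h \<in> point_group)"
    using g h by (auto simp: NA_Mcm_eq inv_AffGroup_klein4 klein4_mult_point_group_iff)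
  moreover have "conj_aut Mcm g \<in> carrier (AutoGroup (Mgrp Mcm))" "conj_aut Mcm h \<in> carrier (AutoGroup (Mgrp Mcm))"
    using g h c.hom_closed by simp_all
  ultimately show ?thesis
    using Aut.rcos_eq_iff[OF normal_imp_subgroup[OF Inn_normal[OF subgroup_Mcm]]] conj_aut_in_Inn_iff[OF gh]
    by simp
qed

lemma Omega_star:
  assumes g: "g \<in> NA Mcm"
  shows "Omega Mcm (star Mcm g) = Inn Mcm #>\<^bsub>AutoGroup (Mgrp Mcm)\<^esub> conj_aut Mcm g"
proof -
  define g' where "g' = (SOME g'. g' \<in> NA Mcm \<and> star Mcm g' = star Mcm g)"
  have "g' \<in> NA Mcm \<and> star Mcm g' = star Mcm g"
    unfolding g'_def by (rule someI[of _ g]) (use g in simp)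
  then have g': "g' \<in> NA Mcm" "star Mcm g' = star Mcm g" by auto
  then have "snd g' \<in> point_group \<longleftrightarrow> snd g \<in> point_group"
    using star_Mcm_eq_iff[of "fst g'" "snd g'" "fst g" "snd g"] g by simp
  then show ?thesis
    using Inn_coset_eq_iff[OF g'(1) g] by (simp add: Omega_def g'_def[symmetric])
qed

lemma Omega_star_mult:
  assumes g: "g \<in> NA Mcm" and h: "h \<in> NA Mcm"
  shows "Omega Mcm (star Mcm (aff_mult g h)) = Omega Mcm (star Mcm g) \<otimes>\<^bsub>Out Mcm\<^esub> Omega Mcm (star Mcm h)"
proof -
  interpret Inn: normal "Inn Mcm" "AutoGroup (Mgrp Mcm)" by (rule Inn_normal[OF subgroup_Mcm])
  have "conj_aut Mcm g \<in> carrier (AutoGroup (Mgrp Mcm))" "conj_aut Mcm h \<in> carrier (AutoGroup (Mgrp Mcm))"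
    using conj_aut_auto[OF subgroup_Mcm g] conj_aut_auto[OF subgroup_Mcm h] by (simp_all add: AutoGroup_def)
  then show ?thesis
    using g h NA_Mcm_mult[OF g h]
    by (simp add: Omega_star conj_aut_mult[OF subgroup_Mcm] Inn.rcos_sum Out_def)
qed

lemma Out_Mcm_carrier:
  "carrier (Out Mcm) = {Omega Mcm (star Mcm (0, mat 1)), Omega Mcm (star Mcm (0, - mat 1))}"
proof -
  have e: "(0, mat 1) \<in> NA Mcm" and r: "(0, - mat 1) \<in> NA Mcm"
    by (auto simp: NA_Mcm_eq lattice_plus_diag_def)
  have "carrier (Out Mcm) = (\<lambda>g. Omega Mcm (star Mcm g)) ` NA Mcm"
    using auto_Mcm_eq by (auto simp: Out_def FactGroup_def RCOSETS_def AutoGroup_def Omega_star)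
  also have "\<dots> = {Omega Mcm (star Mcm (0, mat 1)), Omega Mcm (star Mcm (0, - mat 1))}"
  proof (intro equalityI subsetI)
    fix X assume "X \<in> (\<lambda>g. Omega Mcm (star Mcm g)) ` NA Mcm"
    then obtain g where g: "g \<in> NA Mcm" "X = Omega Mcm (star Mcm g)" by blast
    then show "X \<in> {Omega Mcm (star Mcm (0, mat 1)), Omega Mcm (star Mcm (0, - mat 1))}"
      using Inn_coset_eq_iff[OF g(1) e] Inn_coset_eq_iff[OF g(1) r]
      by (cases "snd g \<in> point_group") (auto simp: Omega_star e r)
  qed (use e r in auto)
  finally show ?thesis .
qed

lemma Omega_iso:
  "Omega Mcm \<in> iso ((AffGrp Mcm)\<lparr>carrier := {\<one>\<^bsub>AffGrp Mcm\<^esub>, star Mcm (0, - mat 1)}\<rparr>) (Out Mcm)"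
proof -
  let ?G = "(AffGrp Mcm)\<lparr>carrier := {\<one>\<^bsub>AffGrp Mcm\<^esub>, star Mcm (0, - mat 1)}\<rparr>"
  have e: "(0, mat 1) \<in> NA Mcm" and r: "(0, - mat 1) \<in> NA Mcm"
    by (auto simp: NA_Mcm_eq lattice_plus_diag_def)
  have carrier: "carrier ?G = star Mcm ` {(0, mat 1), (0, - mat 1)}"
    using star_one[OF subgroup_Mcm] by (simp add: AffGrp_def BijGroup_def)
  have hom: "Omega Mcm \<in> hom ?G (Out Mcm)"
  proof (rule homI)
    show "Omega Mcm \<phi> \<in> carrier (Out Mcm)" if "\<phi> \<in> carrier ?G" for \<phi>
      using that by (auto simp: carrier Out_Mcm_carrier)
  next
    fix \<phi> \<psi> assume "\<phi> \<in> carrier ?G" "\<psi> \<in> carrier ?G"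
    then obtain g h where gh: "g \<in> NA Mcm" "h \<in> NA Mcm" "\<phi> = star Mcm g" "\<psi> = star Mcm h"
      using carrier e r by auto
    then have "\<phi> \<otimes>\<^bsub>?G\<^esub> \<psi> = star Mcm (aff_mult g h)"
      using star_hom[OF subgroup_Mcm] NA_Mcm_mult by (simp add: AffGrp_def hom_def)
    then show "Omega Mcm (\<phi> \<otimes>\<^bsub>?G\<^esub> \<psi>) = Omega Mcm \<phi> \<otimes>\<^bsub>Out Mcm\<^esub> Omega Mcm \<psi>"
      using gh by (simp add: Omega_star_mult)
  qed
  have "Omega Mcm (star Mcm (0, mat 1)) \<noteq> Omega Mcm (star Mcm (0, - mat 1))"
    using Inn_coset_eq_iff[OF e r] by (simp add: Omega_star e r)
  then have "bij_betw (Omega Mcm) (carrier ?G) (carrier (Out Mcm))"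
    by (auto simp: bij_betw_def inj_on_def carrier Out_Mcm_carrier)
  then show ?thesis using hom by (simp add: iso_def)
qed

theorem lemma14:
  shows "(\<exists>f. f \<in> iso (SymGrp Mcm) O2 \<and> homeo_Sym_O2 Mcm f)
       \<and> Sym Mcm = Aff Mcm
       \<and> Omega Mcm \<in> iso ((AffGrp Mcm)\<lparr>carrier := {\<one>\<^bsub>AffGrp Mcm\<^esub>, star Mcm (0, - mat 1)}\<rparr>)
                        (Out Mcm)"
  using sym_to_O2_iso sym_to_O2_homeo Sym_Mcm_eq_Aff Omega_iso by blast

end
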